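(* Let $\gamma\in[0,1)$ be such that the counting hypothesis $\mathrm{H}(\gamma)$ below holds. Then for every $\varepsilon>0$ there exist $b\in(0,\frac12)$ and a constant $C$ such that for all $u,v\in X_{0,b}$ \[ \|Q(u,v)\|_{L^2_tH^{-\frac\gamma2-\varepsilon}}\le C\|u\|_{X_{0,b}}\|v\|_{X_{0,b}}. \]
   Context: $\mathbb T^2=(\mathbb R/2\pi\mathbb Z)^2$; functions are spatially periodic functions of $(x,y,t)\in\mathbb T^2\times\mathbb R$, spatial frequencies are $(\xi,\eta)\in\mathbb Z^2$, and $\widehat f(\xi,\eta,\tau)$ is the Fourier transform in all variables. Let $\varphi(\xi,\eta)=\xi^3-3\xi\eta^2$, $\langle x\rangle=(1+|x|^2)^{1/2}$, and let $X_{s,b}$ be the periodic Bourgain space with norm $\|f\|_{X_{s,b}}^2=\int_{\mathbb R}\sum_{(\xi,\eta)\in\mathbb Z^2}\langle\tau-\varphi(\xi,\eta)\rangle^{2b}\langle(\xi,\eta)\rangle^{2s}|\widehat f(\xi,\eta,\tau)|^2d\tau$. $L^2_tH^{\sigma}$ is the norm $\big(\int_{\mathbb R}\|f(t)\|^2_{H^\sigma(\mathbb T^2)}dt\big)^{1/2}$. The bilinear operator $Q$ is defined by \[ \widehat{Q(u,v)}(\xi,\eta,\tau)=\sum_{(\xi_1,\eta_1)\in\mathbb Z^2}\int_{\mathbb R}(1-\delta_{\xi,0}\delta_{\xi_1,0})\,\widehat u(\xi_1,\eta_1,\tau_1)\,\widehat v(\xi-\xi_1,\eta-\eta_1,\tau-\tau_1)\,d\tau_1,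 \] normalized so that omitting the factor $(1-\delta_{\xi,0}\delta_{\xi_1,0})$ gives the product $uv$. Counting hypothesis $\mathrm{H}(\gamma)$: for every $\varepsilon>0$ there is $c(\varepsilon)$ such that for every $N\ge1$, every square $S\subset\mathbb R^2$ of side length $N$ and every curve $\mathfrak C\subset\mathbb R^2$ of one of the types (i) $\{a(x^2-y^2)+2bxy=c\}$ with $a,b,c\in\mathbb R$, $c\neq0$, or (ii) $\{(x+a)(x^2-y^2)=2(y+b)xy\}$ with $a,b\in\mathbb R$, the number of points of $\mathbb Z^2\cap S$ lying on $\mathfrak C$ but not on a straight line contained in $\mathfrak C$ is at most $c(\varepsilon)N^{\gamma+\varepsilon}$. *)

theory Defs
  imports "HOL-Analysis.Analysis"
begin

text \<open>A space-time function u on T^2 x R is represented by its full Fourier transform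
  uh :: int => int => real => complex, uh xi eta tau.\<close>

type_synonym stfun = "int \<Rightarrow> int \<Rightarrow> real \<Rightarrow> complex"

definition phi :: "int \<Rightarrow> int \<Rightarrow> real" where
  "phi xi eta = real_of_int xi ^ 3 - 3 * real_of_int xi * real_of_int eta ^ 2"

definition jb :: "real \<Rightarrow> real" where
  "jb x = sqrt (1 + x\<^sup>2)"

definition jb2 :: "int \<Rightarrow> int \<Rightarrow> real" where
  "jb2 xi eta = sqrt (1 + real_of_int xi ^ 2 + real_of_int eta ^ 2)"

definition Xsq :: "real \<Rightarrow> real \<Rightarrow> stfun \<Rightarrow> ennreal" where
  "Xsq sr br f = nn_integral lborel (\<lambda>tau. nn_integral (count_space (UNIV :: (int \<times> int) set))
        (\<lambda>k. ennreal ((jb (tau - phi (fst k) (snd k)) powr (2 * br))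
        * (jb2 (fst k) (snd k) powr (2 * sr)) * (cmod (f (fst k) (snd k) tau))\<^sup>2)))"

definition inX :: "real \<Rightarrow> real \<Rightarrow> stfun \<Rightarrow> bool" where
  "inX sr br f \<longleftrightarrow> (\<forall>xi eta. (\<lambda>tau. f xi eta tau) \<in> borel_measurable lborel) \<and> Xsq sr br f < \<infinity>"

text \<open>Squared L^2_t H^sigma norm, computed on the Fourier side (Plancherel in t).\<close>
definition L2Hsq :: "real \<Rightarrow> stfun \<Rightarrow> ennreal" where
  "L2Hsq sg f = nn_integral lborel (\<lambda>tau. nn_integral (count_space (UNIV :: (int \<times> int) set))
        (\<lambda>k. ennreal ((jb2 (fst k) (snd k) powr (2 * sg))
        * (cmod (f (fst k) (snd k) tau))\<^sup>2)))"

definition Q :: "stfun \<Rightarrow> stfun \<Rightarrow> stfun" where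
  "Q u v = (\<lambda>xi eta tau.
     \<Sum>\<^sub>\<infinity>(xi1, eta1)\<in>(UNIV :: (int \<times> int) set).
       (LINT tau1|lborel. (if xi = 0 \<and> xi1 = 0 then 0 else 1)
          * u xi1 eta1 tau1 * v (xi - xi1) (eta - eta1) (tau - tau1)))"

definition curve_i :: "real \<Rightarrow> real \<Rightarrow> real \<Rightarrow> (real \<times> real) set" where
  "curve_i a b c = {(x, y). a * (x\<^sup>2 - y\<^sup>2) + 2 * b * x * y = c}"

definition curve_ii :: "real \<Rightarrow> real \<Rightarrow> (real \<times> real) set" where
  "curve_ii a b = {(x, y). (x + a) * (x\<^sup>2 - y\<^sup>2) = 2 * (y + b) * x * y}"

definition admissible_curve :: "(real \<times> real) set \<Rightarrow> bool" where
  "admissible_curve C \<longleftrightarrow>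
     (\<exists>a b c. c \<noteq> 0 \<and> C = curve_i a b c) \<or> (\<exists>a b. C = curve_ii a b)"

definition is_line :: "(real \<times> real) set \<Rightarrow> bool" where
  "is_line L \<longleftrightarrow> (\<exists>p d. d \<noteq> (0::real \<times> real) \<and> L = {p + t *\<^sub>R d | t. True})"

definition square :: "real \<Rightarrow> real \<Rightarrow> real \<Rightarrow> (real \<times> real) set" where
  "square x0 y0 N = {x0..x0 + N} \<times> {y0..y0 + N}"

definition counted_points :: "(real \<times> real) set \<Rightarrow> (real \<times> real) set \<Rightarrow> (int \<times> int) set" where
  "counted_points S C = {(m, n). (real_of_int m, real_of_int n) \<in> S
       \<and> (real_of_int m, real_of_int n) \<in> C
       \<and> \<not> (\<exists>L. is_line L \<and> L \<subseteq> C \<and> (real_of_int m, real_of_int n) \<in> L)}"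

definition counting_hyp :: "real \<Rightarrow> bool" where
  "counting_hyp gamma \<longleftrightarrow> (\<forall>eps>0. \<exists>c. \<forall>N::real. N \<ge> 1 \<longrightarrow>
     (\<forall>x0 y0 C. admissible_curve C \<longrightarrow>
        real (card (counted_points (square x0 y0 N) C)) \<le> c * N powr (gamma + eps)))"

end

theory Submission
  imports Defs
begin

text \<open>
  Write F k t = <t - phi k>^b |u k t| and G k t likewise for v, so that the X_{0,b} norm of u is
  the l^2 L^2 norm of F. The modulus of Q u v at (k, tau) is at most the sum over k1 of the time
  convolutions of F k1 t <t - phi k1>^-b with G (k - k1) t <t - phi (k - k1)>^-b. Cauchy-Schwarz
  in (k1, t), together with the bound <x>^(1-4b) for the integral of <t>^-2b <x - t>^-2b, reduces
  the estimate to counting lattice points, organised by the resonance function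
  psi k k1 = phi k1 + phi (k - k1). In complex notation 4 psi = phi k + 3 Re (k w^2) with
  w = 2 k1 - k.

  On the resonant set Re (k w^2) = 0 the point w lies, for fixed k1, on a curve of type (ii), so by
  H(gamma) the dyadic shell |k| ~ 2^m contains O(2^((gamma + eps) m)) resonant frequencies, plus at
  most two on lines in the curve; the weight <k>^(-gamma - 2 eps) makes these summable. Off
  resonance, the k1 with psi = n in a tile of side 2^m lie on a curve of type (i) with nonzero
  right-hand side, which contains no line. Each level set therefore has O(2^((gamma + eps) m))
  points, the sum of <tau - psi>^(1-4b) over the tile is O(2^((gamma + eps)(4b - 1) m + 2 (2 - 4b) m)),
  and this is again summable against the weight once b is close enough to 1/2.
\<close>

section \<open>The Japanese bracket\<close>

lemma jb_pos: "jb x > 0"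
  unfolding jb_def by (simp add: add_pos_nonneg)

lemma jb_ge_1: "jb x \<ge> 1"
  unfolding jb_def by simp

lemma abs_le_jb: "\<bar>x\<bar> \<le> jb x"
  unfolding jb_def by (metis add.commute le_add_same_cancel2 real_sqrt_abs real_sqrt_le_iff zero_le_one zero_le_power2)

lemma jb_le_1_plus_abs: "jb x \<le> 1 + \<bar>x\<bar>"
proof -
  have "1 + x\<^sup>2 \<le> (1 + \<bar>x\<bar>)\<^sup>2" by (simp add: power2_eq_square algebra_simps)
  hence "sqrt (1 + x\<^sup>2) \<le> sqrt ((1 + \<bar>x\<bar>)\<^sup>2)" by (rule real_sqrt_le_mono)
  thus ?thesis unfolding jb_def by simp
qed

lemma jb_powr_neg_le_1: "p \<ge> 0 \<Longrightarrow> jb x powr (- p) \<le> 1"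
  using powr_mono2'[of "- p" 1 "jb x"] jb_ge_1[of x] by simp

lemma jb_measurable [measurable]: "jb \<in> borel_measurable borel"
  unfolding jb_def by (intro borel_measurable_continuous_onI continuous_intros)

section \<open>Sums of inverse powers\<close>

lemma powr_succ_diff_ge:
  fixes q N :: real
  assumes q: "0 < q" "q < 1" and N: "N \<ge> 0"
  shows "q * (N + 1) powr (q - 1) \<le> (N + 1) powr q - N powr q"
proof (cases "N = 0")
  case True
  then show ?thesis using q by simp
next
  case False
  hence N: "N > 0" using N by simp
  have "\<exists>z. N < z \<and> z < N + 1 \<and> (N + 1) powr q - N powr q = ((N + 1) - N) * (q * z powr (q - 1))"
    by (rule MVT2) (use N in \<open>auto intro!: has_real_derivative_powr\<close>)
  then obtain z where z: "N < z" "z < N + 1" "(N + 1) powr q - N powr q = q * z powr (q - 1)"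
    by auto
  have "(N + 1) powr (q - 1) \<le> z powr (q - 1)"
    using z N q by (intro powr_mono2') auto
  then show ?thesis using z q by simp
qed

lemma sum_powr_neg_le:
  fixes p :: real
  assumes p: "0 < p" "p < 1"
  shows "(\<Sum>j=1..n. real j powr (- p)) \<le> real n powr (1 - p) / (1 - p)"
proof (induction n)
  case 0
  then show ?case by simp
next
  case (Suc n)
  have "(1 - p) * real (Suc n) powr (- p) \<le> real (Suc n) powr (1 - p) - real n powr (1 - p)"
    using powr_succ_diff_ge[of "1 - p" "real n"] p by (simp add: add.commute)
  hence "real (Suc n) powr (- p) \<le> (real (Suc n) powr (1 - p) - real n powr (1 - p)) / (1 - p)"
    using p by (simp add: pos_le_divide_eq mult.commute)
  with Suc show ?case by (simp add: diff_divide_distrib)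
qed

lemma sum_jb_powr_inj_le:
  fixes S :: "int set" and d :: "int \<Rightarrow> nat"
  assumes S: "finite S" and inj: "inj_on d S" and p: "p > 0"
    and dT: "\<And>n. n \<in> S \<Longrightarrow> real (d n) \<le> T"
    and d: "\<And>n. n \<in> S \<Longrightarrow> real (d n) \<le> \<bar>\<tau> - real_of_int n\<bar>"
  shows "(\<Sum>n\<in>S. jb (\<tau> - real_of_int n) powr (- p)) \<le> 2 powr p * (\<Sum>j=1..nat \<lfloor>T\<rfloor> + 1. real j powr (- p))"
proof -
  have jb: "jb (\<tau> - real_of_int n) powr (- p) \<le> 2 powr p * (1 + real (d n)) powr (- p)" if "n \<in> S" for n
  proof -
    have "1 + real (d n) \<le> 2 * jb (\<tau> - real_of_int n)"
      using d[OF that] jb_ge_1[of "\<tau> - real_of_int n"] abs_le_jb[of "\<tau> - real_of_int n"] by linarith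
    hence "(1 + real (d n)) / 2 \<le> jb (\<tau> - real_of_int n)" by simp
    hence "jb (\<tau> - real_of_int n) powr (- p) \<le> ((1 + real (d n)) / 2) powr (- p)"
      using p by (intro powr_mono2') auto
    thus ?thesis by (simp add: powr_divide powr_minus divide_simps)
  qed
  have img: "d ` S \<subseteq> {0..nat \<lfloor>T\<rfloor>}"
    using dT by (force simp: le_nat_iff le_floor_iff)
  have "(\<Sum>n\<in>S. jb (\<tau> - real_of_int n) powr (- p)) \<le> (\<Sum>n\<in>S. 2 powr p * (1 + real (d n)) powr (- p))"
    by (intro sum_mono jb)
  also have "\<dots> = 2 powr p * (\<Sum>i\<in>d ` S. (1 + real i) powr (- p))"
    by (simp add: sum_distrib_left sum.reindex[OF inj])
  also have "(\<Sum>i\<in>d ` S. (1 + real i) powr (- p)) \<le> (\<Sum>i=0..nat \<lfloor>T\<rfloor>. (1 + real i) powr (- p))"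
    by (intro sum_mono2 img) auto
  also have "\<dots> = (\<Sum>j=1..nat \<lfloor>T\<rfloor> + 1. real j powr (- p))"
    using sum.shift_bounds_cl_Suc_ivl[of "\<lambda>j. real j powr (- p)" 0 "nat \<lfloor>T\<rfloor>"] by (simp add: add.commute)
  finally show ?thesis by (simp add: mult_left_mono)
qed

lemma finite_int_near: "finite {n::int. \<bar>\<tau> - real_of_int n\<bar> \<le> T}"
proof (rule finite_subset)
  show "{n::int. \<bar>\<tau> - real_of_int n\<bar> \<le> T} \<subseteq> {\<lceil>\<tau> - T\<rceil>..\<lfloor>\<tau> + T\<rfloor>}"
    by (auto simp: ceiling_le_iff le_floor_iff abs_le_iff)
qed auto

lemma sum_jb_powr_near_le:
  fixes p T \<tau> :: real
  assumes p: "0 < p" "p < 1" and T: "T \<ge> 1"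
  shows "(\<Sum>n | \<bar>\<tau> - real_of_int n\<bar> \<le> T. jb (\<tau> - real_of_int n) powr (- p)) \<le> 4 * T powr (1 - p) / (1 - p)"
proof -
  define S where "S = {n::int. \<bar>\<tau> - real_of_int n\<bar> \<le> T}"
  define n0 where "n0 = \<lfloor>\<tau>\<rfloor>"
  define h where "h n = jb (\<tau> - real_of_int n) powr (- p)" for n
  define B where "B = 2 powr p * (\<Sum>j=1..nat \<lfloor>T\<rfloor> + 1. real j powr (- p))"
  have S: "finite S" unfolding S_def by (rule finite_int_near)
  have below: "(\<Sum>n\<in>S \<inter> {..n0}. h n) \<le> B"
    unfolding B_def h_def
  proof (rule sum_jb_powr_inj_le[where d = "\<lambda>n. nat (n0 - n)"])
    fix n assume n: "n \<in> S \<inter> {..n0}"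
    have "real_of_int n0 \<le> \<tau>" unfolding n0_def by simp
    with n show "real (nat (n0 - n)) \<le> T" "real (nat (n0 - n)) \<le> \<bar>\<tau> - real_of_int n\<bar>"
      by (auto simp: S_def)
  qed (use S p in \<open>auto simp: inj_on_def\<close>)
  have above: "(\<Sum>n\<in>S - {..n0}. h n) \<le> B"
    unfolding B_def h_def
  proof (rule sum_jb_powr_inj_le[where d = "\<lambda>n. nat (n - n0 - 1)"])
    fix n assume n: "n \<in> S - {..n0}"
    have "\<tau> < real_of_int n0 + 1" unfolding n0_def by linarith
    with n show "real (nat (n - n0 - 1)) \<le> T" "real (nat (n - n0 - 1)) \<le> \<bar>\<tau> - real_of_int n\<bar>"
      by (auto simp: S_def)
  qed (use S p in \<open>auto simp: inj_on_def\<close>)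
  have "(\<Sum>j=1..nat \<lfloor>T\<rfloor> + 1. real j powr (- p)) \<le> real (nat \<lfloor>T\<rfloor> + 1) powr (1 - p) / (1 - p)"
    by (rule sum_powr_neg_le) (use p in auto)
  also have "\<dots> \<le> (2 * T) powr (1 - p) / (1 - p)"
  proof -
    have "real (nat \<lfloor>T\<rfloor> + 1) \<le> 2 * T" using T by linarith
    thus ?thesis using p T by (intro divide_right_mono powr_mono2) auto
  qed
  also have "\<dots> = 2 powr (1 - p) * T powr (1 - p) / (1 - p)"
    using T by (simp add: powr_mult)
  finally have "B \<le> 2 powr p * (2 powr (1 - p) * T powr (1 - p) / (1 - p))"
    unfolding B_def by (intro mult_left_mono) auto
  also have "\<dots> = 2 * T powr (1 - p) / (1 - p)"
    by (simp add: powr_add[symmetric])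
  finally have "B \<le> 2 * T powr (1 - p) / (1 - p)" .
  moreover have "(\<Sum>n\<in>S. h n) = (\<Sum>n\<in>S \<inter> {..n0}. h n) + (\<Sum>n\<in>S - {..n0}. h n)"
    using S by (rule sum.Int_Diff)
  ultimately show ?thesis using below above unfolding S_def h_def by simp
qed

lemma sum_jb_powr_levels_near_le:
  fixes X :: "'a set" and \<psi> :: "'a \<Rightarrow> int"
  assumes X: "finite X" and lev: "\<And>n. real (card {x\<in>X. \<psi> x = n}) \<le> A"
    and A: "A \<ge> 0" and p: "0 < p" "p < 1" and T: "T \<ge> 1"
  shows "(\<Sum>x | x \<in> X \<and> \<bar>\<tau> - real_of_int (\<psi> x)\<bar> \<le> T. jb (\<tau> - real_of_int (\<psi> x)) powr (- p))
    \<le> A * (4 * T powr (1 - p) / (1 - p))"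
proof -
  define h where "h n = jb (\<tau> - real_of_int n) powr (- p)" for n
  define Xn where "Xn = {x. x \<in> X \<and> \<bar>\<tau> - real_of_int (\<psi> x)\<bar> \<le> T}"
  have Xn: "finite Xn" using X by (simp add: Xn_def)
  have "(\<Sum>x\<in>Xn. h (\<psi> x)) = (\<Sum>n\<in>\<psi> ` Xn. real (card {x\<in>Xn. \<psi> x = n}) * h n)"
    using sum.image_gen[OF Xn, of "\<lambda>x. h (\<psi> x)" \<psi>] by simp
  also have "\<dots> \<le> (\<Sum>n\<in>\<psi> ` Xn. A * h n)"
  proof (intro sum_mono mult_right_mono)
    fix n
    have "card {x\<in>Xn. \<psi> x = n} \<le> card {x\<in>X. \<psi> x = n}"
      using X by (intro card_mono) (auto simp: Xn_def)
    thus "real (card {x\<in>Xn. \<psi> x = n}) \<le> A" using lev[of n] by linarith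
  qed (simp add: h_def)
  also have "\<dots> \<le> (\<Sum>n | \<bar>\<tau> - real_of_int n\<bar> \<le> T. A * h n)"
    by (rule sum_mono2[OF finite_int_near]) (use A in \<open>auto simp: Xn_def h_def\<close>)
  also have "\<dots> \<le> A * (4 * T powr (1 - p) / (1 - p))"
    unfolding sum_distrib_left[symmetric] h_def using A by (intro mult_left_mono sum_jb_powr_near_le p T)
  finally show ?thesis unfolding Xn_def h_def .
qed

lemma sum_jb_powr_levels_far_le:
  fixes X :: "'a set" and \<psi> :: "'a \<Rightarrow> int"
  assumes X: "finite X" and cX: "real (card X) \<le> P" and T: "T > 0" and p: "p > 0"
  shows "(\<Sum>x | x \<in> X \<and> \<not> \<bar>\<tau> - real_of_int (\<psi> x)\<bar> \<le> T. jb (\<tau> - real_of_int (\<psi> x)) powr (- p))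
    \<le> P * T powr (- p)"
proof -
  have "(\<Sum>x | x \<in> X \<and> \<not> \<bar>\<tau> - real_of_int (\<psi> x)\<bar> \<le> T. jb (\<tau> - real_of_int (\<psi> x)) powr (- p))
      \<le> (\<Sum>x | x \<in> X \<and> \<not> \<bar>\<tau> - real_of_int (\<psi> x)\<bar> \<le> T. T powr (- p))"
  proof (intro sum_mono)
    fix x assume "x \<in> {x. x \<in> X \<and> \<not> \<bar>\<tau> - real_of_int (\<psi> x)\<bar> \<le> T}"
    hence "T \<le> jb (\<tau> - real_of_int (\<psi> x))" using abs_le_jb[of "\<tau> - real_of_int (\<psi> x)"] by auto
    thus "jb (\<tau> - real_of_int (\<psi> x)) powr (- p) \<le> T powr (- p)" using T p by (intro powr_mono2') auto
  qed
  also have "\<dots> \<le> P * T powr (- p)"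
  proof -
    have "card {x. x \<in> X \<and> \<not> \<bar>\<tau> - real_of_int (\<psi> x)\<bar> \<le> T} \<le> card X"
      using X by (intro card_mono) auto
    thus ?thesis using cX by (simp add: mult_right_mono)
  qed
  finally show ?thesis .
qed

text \<open>Split at distance T = P/A from tau: near tau every integer value of psi is taken at most A
  times, far from tau every term is at most T^-p.\<close>

lemma sum_jb_powr_levels_le:
  fixes X :: "'a set" and \<psi> :: "'a \<Rightarrow> int" and A P p \<tau> :: real
  assumes X: "finite X" and lev: "\<And>n. real (card {x\<in>X. \<psi> x = n}) \<le> A"
    and cX: "real (card X) \<le> P" and A: "A \<ge> 1" and p: "0 < p" "p < 1"
  shows "(\<Sum>x\<in>X. jb (\<tau> - real_of_int (\<psi> x)) powr (- p)) \<le> (1 + 4 / (1 - p)) * (A powr p * P powr (1 - p))"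
proof -
  define h where "h x = jb (\<tau> - real_of_int (\<psi> x)) powr (- p)" for x
  have P: "P \<ge> 0" using cX by linarith
  have R: "A powr p * P powr (1 - p) \<ge> 0" by simp
  show ?thesis
  proof (cases "P \<le> A")
    case True
    have "(\<Sum>x\<in>X. h x) \<le> (\<Sum>x\<in>X. 1)"
      unfolding h_def by (intro sum_mono jb_powr_neg_le_1) (use p in auto)
    also have "\<dots> \<le> P" using cX by simp
    also have "P \<le> A powr p * P powr (1 - p)"
    proof (cases "P = 0")
      case False
      hence "P = P powr p * P powr (1 - p)" using P by (simp add: powr_add[symmetric])
      also have "\<dots> \<le> A powr p * P powr (1 - p)"
        using True P p by (intro mult_right_mono powr_mono2) auto
      finally show ?thesis .
    qed simp
    also have "\<dots> \<le> (1 + 4 / (1 - p)) * (A powr p * P powr (1 - p))"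
      using mult_right_mono[OF _ R, of 1 "1 + 4 / (1 - p)"] p by simp
    finally show ?thesis unfolding h_def .
  next
    case False
    define T where "T = P / A"
    have T: "T \<ge> 1" using False A by (simp add: T_def)
    have "(\<Sum>x | x \<in> X \<and> \<not> \<bar>\<tau> - real_of_int (\<psi> x)\<bar> \<le> T. h x) \<le> P * T powr (- p)"
      unfolding h_def using T p by (intro sum_jb_powr_levels_far_le[OF X cX]) auto
    also have "\<dots> = A powr p * P powr (1 - p)"
      using A P T unfolding T_def by (simp add: powr_divide powr_minus powr_diff divide_simps)
    finally have far: "(\<Sum>x | x \<in> X \<and> \<not> \<bar>\<tau> - real_of_int (\<psi> x)\<bar> \<le> T. h x) \<le> A powr p * P powr (1 - p)" .
    have "(\<Sum>x | x \<in> X \<and> \<bar>\<tau> - real_of_int (\<psi> x)\<bar> \<le> T. h x) \<le> A * (4 * T powr (1 - p) / (1 - p))"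
      unfolding h_def by (rule sum_jb_powr_levels_near_le[OF X lev _ p T]) (use A in simp)
    also have "\<dots> = 4 / (1 - p) * (A * T powr (1 - p))"
      by simp
    also have "A * T powr (1 - p) = A powr p * P powr (1 - p)"
      using A P T unfolding T_def by (simp add: powr_divide powr_diff divide_simps powr_add[symmetric])
    finally have near: "(\<Sum>x | x \<in> X \<and> \<bar>\<tau> - real_of_int (\<psi> x)\<bar> \<le> T. h x) \<le> 4 / (1 - p) * (A powr p * P powr (1 - p))" .
    have "X \<inter> {x. \<bar>\<tau> - real_of_int (\<psi> x)\<bar> \<le> T} = {x. x \<in> X \<and> \<bar>\<tau> - real_of_int (\<psi> x)\<bar> \<le> T}"
      and "X - {x. \<bar>\<tau> - real_of_int (\<psi> x)\<bar> \<le> T} = {x. x \<in> X \<and> \<not> \<bar>\<tau> - real_of_int (\<psi> x)\<bar> \<le> T}"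
      by auto
    hence "(\<Sum>x\<in>X. h x) = (\<Sum>x | x \<in> X \<and> \<bar>\<tau> - real_of_int (\<psi> x)\<bar> \<le> T. h x)
        + (\<Sum>x | x \<in> X \<and> \<not> \<bar>\<tau> - real_of_int (\<psi> x)\<bar> \<le> T. h x)"
      using sum.Int_Diff[OF X, of h "{x. \<bar>\<tau> - real_of_int (\<psi> x)\<bar> \<le> T}"] by simp
    also have "\<dots> \<le> 4 / (1 - p) * (A powr p * P powr (1 - p)) + A powr p * P powr (1 - p)"
      by (rule add_mono[OF near far])
    finally show ?thesis unfolding h_def by (simp add: distrib_right)
  qed
qed

section \<open>Convolution of Japanese brackets\<close>

lemma nn_integral_lborel_translate:
  fixes f :: "real \<Rightarrow> ennreal"
  assumes [measurable]: "f \<in> borel_measurable borel"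
  shows "(\<integral>\<^sup>+x. f (x - c) \<partial>lborel) = (\<integral>\<^sup>+x. f x \<partial>lborel)"
  using nn_integral_real_affine[of "\<lambda>x. f (x - c)" 1 c] by simp

lemma nn_integral_lborel_reflect:
  fixes f :: "real \<Rightarrow> ennreal"
  assumes [measurable]: "f \<in> borel_measurable borel"
  shows "(\<integral>\<^sup>+x. f (- x) \<partial>lborel) = (\<integral>\<^sup>+x. f x \<partial>lborel)"
  using nn_integral_real_affine[of f "-1" 0] by simp

lemma nn_integral_even_le:
  fixes f :: "real \<Rightarrow> ennreal"
  assumes [measurable]: "f \<in> borel_measurable borel"
    and "\<And>t. g t \<le> f t + f (- t)"
  shows "(\<integral>\<^sup>+t. g t \<partial>lborel) \<le> 2 * (\<integral>\<^sup>+t. f t \<partial>lborel)"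
proof -
  have "(\<integral>\<^sup>+t. g t \<partial>lborel) \<le> (\<integral>\<^sup>+t. f t + f (- t) \<partial>lborel)"
    by (intro nn_integral_mono assms(2))
  also have "\<dots> = (\<integral>\<^sup>+t. f t \<partial>lborel) + (\<integral>\<^sup>+t. f (- t) \<partial>lborel)"
    by (rule nn_integral_add) auto
  also have "(\<integral>\<^sup>+t. f (- t) \<partial>lborel) = (\<integral>\<^sup>+t. f t \<partial>lborel)"
    by (rule nn_integral_lborel_reflect) simp
  finally show ?thesis by (simp add: mult_2)
qed

lemma nn_integral_powr_neg_Icc:
  assumes a: "0 < a" "a < 1" and R: "R \<ge> 0"
  shows "(\<integral>\<^sup>+t. ennreal (if 0 \<le> t \<and> t \<le> R then t powr (- a) else 0) \<partial>lborel) = ennreal (R powr (1 - a) / (1 - a))"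
proof -
  have "((\<lambda>x. x powr (- a)) has_integral (R powr (- a + 1) / (- a + 1))) {0..R}"
    using a R by (intro has_integral_powr_from_0) auto
  hence "(\<integral>\<^sup>+t. ennreal (t powr (- a)) * indicator {0..R} t \<partial>lborel) = ennreal (R powr (- a + 1) / (- a + 1))"
    by (intro nn_integral_has_integral_lebesgue') auto
  moreover have "(\<lambda>t. ennreal (if 0 \<le> t \<and> t \<le> R then t powr (- a) else 0)) = (\<lambda>t. ennreal (t powr (- a)) * indicator {0..R} t)"
    by (auto simp: indicator_def)
  ultimately show ?thesis by (simp add: add.commute)
qed

lemma nn_integral_powr_neg_Ici:
  assumes c: "c > 1" and R: "R > 0"
  shows "(\<integral>\<^sup>+t. ennreal (if R \<le> t then t powr (- c) else 0) \<partial>lborel) = ennreal (R powr (1 - c) / (c - 1))"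
proof -
  have "((\<lambda>x. x powr (- c)) has_integral - (R powr (- c + 1)) / (- c + 1)) {R..}"
    using c R by (intro has_integral_powr_to_inf) auto
  hence "(\<integral>\<^sup>+t. ennreal (t powr (- c)) * indicator {R..} t \<partial>lborel) = ennreal (- (R powr (- c + 1)) / (- c + 1))"
    by (intro nn_integral_has_integral_lebesgue') auto
  moreover have "(\<lambda>t. ennreal (if R \<le> t then t powr (- c) else 0)) = (\<lambda>t. ennreal (t powr (- c)) * indicator {R..} t)"
    by (auto simp: indicator_def)
  moreover have "- (R powr (- c + 1)) / (- c + 1) = R powr (1 - c) / (c - 1)"
    using c by (simp add: field_simps add.commute)
  ultimately show ?thesis by simp
qed

lemma nn_integral_abs_powr_near_le:
  assumes a: "0 < a" "a < 1" and R: "R \<ge> 0"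
  shows "(\<integral>\<^sup>+t. ennreal (if \<bar>t - c\<bar> \<le> R then \<bar>t - c\<bar> powr (- a) else 0) \<partial>lborel) \<le> ennreal (2 * (R powr (1 - a) / (1 - a)))"
proof -
  define g where "g t = ennreal (if 0 \<le> t \<and> t \<le> R then t powr (- a) else 0)" for t :: real
  have "(\<integral>\<^sup>+t. ennreal (if \<bar>t - c\<bar> \<le> R then \<bar>t - c\<bar> powr (- a) else 0) \<partial>lborel)
      = (\<integral>\<^sup>+t. ennreal (if \<bar>t\<bar> \<le> R then \<bar>t\<bar> powr (- a) else 0) \<partial>lborel)"
    by (rule nn_integral_lborel_translate[of "\<lambda>t. ennreal (if \<bar>t\<bar> \<le> R then \<bar>t\<bar> powr (- a) else 0)"]) measurable
  also have "\<dots> \<le> 2 * (\<integral>\<^sup>+t. g t \<partial>lborel)"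
    by (rule nn_integral_even_le) (auto simp: g_def)
  also have "(\<integral>\<^sup>+t. g t \<partial>lborel) = ennreal (R powr (1 - a) / (1 - a))"
    unfolding g_def by (rule nn_integral_powr_neg_Icc[OF a R])
  finally show ?thesis using a R by (simp add: numeral_mult_ennreal)
qed

lemma nn_integral_abs_powr_far_le:
  assumes c: "c > 1" and R: "R > 0"
  shows "(\<integral>\<^sup>+t. ennreal (if R \<le> \<bar>t\<bar> then \<bar>t\<bar> powr (- c) else 0) \<partial>lborel) \<le> ennreal (2 * (R powr (1 - c) / (c - 1)))"
proof -
  define g where "g t = ennreal (if R \<le> t then t powr (- c) else 0)" for t :: real
  have "(\<integral>\<^sup>+t. ennreal (if R \<le> \<bar>t\<bar> then \<bar>t\<bar> powr (- c) else 0) \<partial>lborel) \<le> 2 * (\<integral>\<^sup>+t. g t \<partial>lborel)"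
    by (rule nn_integral_even_le) (use R in \<open>auto simp: g_def\<close>)
  also have "(\<integral>\<^sup>+t. g t \<partial>lborel) = ennreal (R powr (1 - c) / (c - 1))"
    unfolding g_def by (rule nn_integral_powr_neg_Ici[OF c R])
  finally show ?thesis using c R by (simp add: numeral_mult_ennreal)
qed

lemma nn_integral_jb_powr_le:
  assumes c: "c > 1"
  shows "(\<integral>\<^sup>+t. ennreal (jb t powr (- c)) \<partial>lborel) \<le> ennreal (2 + 2 / (c - 1))"
proof -
  define E where "E t = ennreal (if 1 \<le> \<bar>t\<bar> then \<bar>t\<bar> powr (- c) else 0)" for t :: real
  have [measurable]: "E \<in> borel_measurable borel" unfolding E_def by measurable
  have "ennreal (jb t powr (- c)) \<le> indicator {-1..1} t + E t" for t
  proof (cases "1 \<le> \<bar>t\<bar>")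
    case True
    hence "jb t powr (- c) \<le> \<bar>t\<bar> powr (- c)" using c abs_le_jb[of t] by (intro powr_mono2') auto
    thus ?thesis using True by (auto simp: E_def indicator_def intro: add_increasing)
  next
    case False
    thus ?thesis using jb_powr_neg_le_1[of c t] c by (auto simp: E_def indicator_def)
  qed
  hence "(\<integral>\<^sup>+t. ennreal (jb t powr (- c)) \<partial>lborel) \<le> (\<integral>\<^sup>+t. indicator {-1..1::real} t + E t \<partial>lborel)"
    by (intro nn_integral_mono)
  also have "\<dots> = 2 + (\<integral>\<^sup>+t. E t \<partial>lborel)"
    by (subst nn_integral_add) (auto simp: E_def)
  also have "(\<integral>\<^sup>+t. E t \<partial>lborel) \<le> ennreal (2 / (c - 1))"
    using nn_integral_abs_powr_far_le[of c 1] c unfolding E_def by simp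
  also have "2 + ennreal (2 / (c - 1)) = ennreal (2 + 2 / (c - 1))"
    using c by (metis ennreal_numeral ennreal_plus less_eq_real_def divide_pos_pos diff_gt_0_iff_gt zero_less_numeral)
  finally show ?thesis by simp
qed

definition bracket_conv :: "real \<Rightarrow> real \<Rightarrow> ennreal" where
  "bracket_conv a x = (\<integral>\<^sup>+t. ennreal (jb t powr (- a) * jb (x - t) powr (- a)) \<partial>lborel)"

definition bracket_conv_const :: "real \<Rightarrow> real" where
  "bracket_conv_const a = 9 * (2 + 2 / (2 * a - 1)) + 4 * (4 / (1 - a) + 8 / (2 * a - 1))"

lemma bracket_conv_const_pos: "1/2 < a \<Longrightarrow> a < 1 \<Longrightarrow> bracket_conv_const a > 0"
  unfolding bracket_conv_const_def by (intro add_pos_pos mult_pos_pos) auto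

lemma bracket_conv_shift:
  "(\<integral>\<^sup>+t. ennreal (jb (t - \<alpha>) powr (- a) * jb (\<tau> - t - \<beta>) powr (- a)) \<partial>lborel) = bracket_conv a (\<tau> - \<alpha> - \<beta>)"
  unfolding bracket_conv_def
  using nn_integral_lborel_translate[of "\<lambda>t. ennreal (jb t powr (- a) * jb (\<tau> - \<alpha> - \<beta> - t) powr (- a))" \<alpha>]
  by (simp add: algebra_simps)

lemma bracket_conv_le_near:
  assumes a: "1/2 < a" "a < 1" and x: "\<bar>x\<bar> \<le> 2"
  shows "bracket_conv a x \<le> ennreal (3 * (2 + 2 / (2 * a - 1)))"
proof -
  have pt: "jb t powr (- a) * jb (x - t) powr (- a) \<le> 3 * jb t powr (- (2 * a))" for t
  proof -
    have "1 + t\<^sup>2 \<le> 9 * (1 + (x - t)\<^sup>2)"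
    proof -
      have "t\<^sup>2 \<le> 2 * (x - t)\<^sup>2 + 2 * x\<^sup>2"
        using zero_le_power2[of "x + (x - t)"] by (simp add: power2_eq_square algebra_simps)
      moreover have "\<bar>x\<bar>\<^sup>2 \<le> 2\<^sup>2" using x by (intro power_mono) auto
      hence "x\<^sup>2 \<le> 4" by simp
      ultimately show ?thesis using zero_le_power2[of "x - t"] unfolding distrib_left by linarith
    qed
    hence "sqrt (1 + t\<^sup>2) \<le> sqrt (9 * (1 + (x - t)\<^sup>2))" by (rule real_sqrt_le_mono)
    hence "sqrt (1 + t\<^sup>2) \<le> sqrt 9 * sqrt (1 + (x - t)\<^sup>2)" by (simp only: real_sqrt_mult)
    moreover have "sqrt 9 = (3::real)" using real_sqrt_abs[of 3] by simp
    ultimately have "sqrt (1 + t\<^sup>2) \<le> 3 * sqrt (1 + (x - t)\<^sup>2)" by simp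
    hence "jb t / 3 \<le> jb (x - t)" unfolding jb_def by simp
    hence "jb (x - t) powr (- a) \<le> (jb t / 3) powr (- a)" using a jb_pos[of t] by (intro powr_mono2') auto
    also have "\<dots> = 3 powr a * jb t powr (- a)" by (simp add: powr_divide powr_minus divide_simps)
    also have "\<dots> \<le> 3 * jb t powr (- a)"
      using powr_mono[of a 1 3] a by (intro mult_right_mono) auto
    finally have "jb t powr (- a) * jb (x - t) powr (- a) \<le> jb t powr (- a) * (3 * jb t powr (- a))"
      by (intro mult_left_mono) auto
    also have "\<dots> = 3 * jb t powr (- (2 * a))" by (simp add: powr_add[symmetric])
    finally show ?thesis .
  qed
  have "bracket_conv a x \<le> (\<integral>\<^sup>+t. 3 * ennreal (jb t powr (- (2 * a))) \<partial>lborel)"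
    unfolding bracket_conv_def using pt by (intro nn_integral_mono) (simp add: numeral_mult_ennreal)
  also have "\<dots> = 3 * (\<integral>\<^sup>+t. ennreal (jb t powr (- (2 * a))) \<partial>lborel)"
    by (rule nn_integral_cmult) simp
  also have "\<dots> \<le> 3 * ennreal (2 + 2 / (2 * a - 1))"
    using nn_integral_jb_powr_le[of "2 * a"] a by (intro mult_left_mono) auto
  finally show ?thesis using a by (simp add: numeral_mult_ennreal)
qed

text \<open>For |x| > 2 and R = |x|/2: where t or x - t is within R of 0 the other bracket is at least R;
  elsewhere |x - t| >= |t|/4.\<close>

lemma jb_powr_product_le:
  fixes a x t :: real
  assumes a: "0 < a" and x: "\<bar>x\<bar> > 2" and t: "t \<noteq> 0" "t \<noteq> x"
  defines "R \<equiv> \<bar>x\<bar> / 2"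
  shows "jb t powr (- a) * jb (x - t) powr (- a) \<le>
     R powr (- a) * (if \<bar>t - 0\<bar> \<le> R then \<bar>t - 0\<bar> powr (- a) else 0)
   + R powr (- a) * (if \<bar>t - x\<bar> \<le> R then \<bar>t - x\<bar> powr (- a) else 0)
   + 4 powr a * (if R \<le> \<bar>t\<bar> then \<bar>t\<bar> powr (- (2 * a)) else 0)"
proof -
  have R: "R > 1" unfolding R_def using x by simp
  have at: "jb t powr (- a) \<le> \<bar>t\<bar> powr (- a)"
    using t a abs_le_jb[of t] by (intro powr_mono2') auto
  have axt: "jb (x - t) powr (- a) \<le> \<bar>t - x\<bar> powr (- a)"
    using t a abs_le_jb[of "x - t"] by (intro powr_mono2') auto
  have nn: "0 \<le> jb t powr (- a)" "0 \<le> jb (x - t) powr (- a)" by auto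
  consider (near0) "\<bar>t\<bar> \<le> R" | (nearx) "\<not> \<bar>t\<bar> \<le> R" "\<bar>t - x\<bar> \<le> R" | (far) "\<not> \<bar>t\<bar> \<le> R" "\<not> \<bar>t - x\<bar> \<le> R"
    by blast
  then show ?thesis
  proof cases
    case near0
    have "R \<le> jb (x - t)" using near0 abs_le_jb[of "x - t"] unfolding R_def by linarith
    hence "jb (x - t) powr (- a) \<le> R powr (- a)" using R a by (intro powr_mono2') auto
    hence "jb t powr (- a) * jb (x - t) powr (- a) \<le> \<bar>t\<bar> powr (- a) * R powr (- a)"
      using at nn by (intro mult_mono) auto
    thus ?thesis using near0 R by (simp add: mult.commute add_increasing2)
  next
    case nearx
    have "R \<le> jb t" using nearx abs_le_jb[of t] by linarith
    hence "jb t powr (- a) \<le> R powr (- a)" using R a by (intro powr_mono2') auto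
    hence "jb t powr (- a) * jb (x - t) powr (- a) \<le> R powr (- a) * \<bar>t - x\<bar> powr (- a)"
      using axt nn by (intro mult_mono) auto
    thus ?thesis using nearx R by (simp add: add_increasing2)
  next
    case far
    have "\<bar>t\<bar> / 4 \<le> \<bar>x - t\<bar>"
    proof (cases "\<bar>t\<bar> \<ge> 4 * R")
      case True thus ?thesis unfolding R_def by linarith
    next
      case False thus ?thesis using far unfolding R_def by linarith
    qed
    hence "\<bar>t\<bar> / 4 \<le> jb (x - t)" using abs_le_jb[of "x - t"] by linarith
    hence "jb (x - t) powr (- a) \<le> (\<bar>t\<bar> / 4) powr (- a)" using t a by (intro powr_mono2') auto
    also have "\<dots> = 4 powr a * \<bar>t\<bar> powr (- a)" by (simp add: powr_divide powr_minus divide_simps)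
    finally have "jb t powr (- a) * jb (x - t) powr (- a) \<le> \<bar>t\<bar> powr (- a) * (4 powr a * \<bar>t\<bar> powr (- a))"
      using at nn by (intro mult_mono) auto
    also have "\<dots> = 4 powr a * \<bar>t\<bar> powr (- (2 * a))"
      by (simp add: powr_add[symmetric])
    finally show ?thesis using far by simp
  qed
qed

lemma bracket_conv_le_far_powr:
  assumes a: "1/2 < a" "a < 1" and x: "\<bar>x\<bar> > 2"
  defines "R \<equiv> \<bar>x\<bar> / 2"
  shows "bracket_conv a x \<le> ennreal (R powr (1 - 2 * a) * (4 / (1 - a)) + 4 powr a * (2 * (R powr (1 - 2 * a) / (2 * a - 1))))"
proof -
  have R: "R > 1" using x R_def by simp
  define g1 where "g1 t = ennreal (if \<bar>t - 0\<bar> \<le> R then \<bar>t - 0\<bar> powr (- a) else 0)" for t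
  define g2 where "g2 t = ennreal (if \<bar>t - x\<bar> \<le> R then \<bar>t - x\<bar> powr (- a) else 0)" for t
  define g3 where "g3 t = ennreal (if R \<le> \<bar>t\<bar> then \<bar>t\<bar> powr (- (2 * a)) else 0)" for t
  have [measurable]: "g1 \<in> borel_measurable lborel" unfolding g1_def by measurable
  have [measurable]: "g2 \<in> borel_measurable lborel" unfolding g2_def by measurable
  have [measurable]: "g3 \<in> borel_measurable lborel" unfolding g3_def by measurable
  have "bracket_conv a x \<le> (\<integral>\<^sup>+t. ennreal (R powr (- a)) * g1 t + ennreal (R powr (- a)) * g2 t + ennreal (4 powr a) * g3 t \<partial>lborel)"
    unfolding bracket_conv_def
  proof (rule nn_integral_mono_AE)
    have "AE t in lborel. t \<noteq> 0" "AE t in lborel. t \<noteq> x" by (rule AE_lborel_singleton)+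
    then show "AE t in lborel. ennreal (jb t powr (- a) * jb (x - t) powr (- a))
        \<le> ennreal (R powr (- a)) * g1 t + ennreal (R powr (- a)) * g2 t + ennreal (4 powr a) * g3 t"
    proof eventually_elim
      case (elim t)
      have "ennreal (jb t powr (- a) * jb (x - t) powr (- a)) \<le> ennreal (
         R powr (- a) * (if \<bar>t - 0\<bar> \<le> R then \<bar>t - 0\<bar> powr (- a) else 0)
       + R powr (- a) * (if \<bar>t - x\<bar> \<le> R then \<bar>t - x\<bar> powr (- a) else 0)
       + 4 powr a * (if R \<le> \<bar>t\<bar> then \<bar>t\<bar> powr (- (2 * a)) else 0))"
        unfolding R_def using jb_powr_product_le[of a x t] a x elim by (intro ennreal_leI) simp
      also have "\<dots> = ennreal (R powr (- a)) * g1 t + ennreal (R powr (- a)) * g2 t + ennreal (4 powr a) * g3 t"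
        unfolding g1_def g2_def g3_def by (simp add: ennreal_plus ennreal_mult del: ennreal_plus[symmetric])
      finally show ?case .
    qed
  qed
  also have "\<dots> = ennreal (R powr (- a)) * (\<integral>\<^sup>+t. g1 t \<partial>lborel) + ennreal (R powr (- a)) * (\<integral>\<^sup>+t. g2 t \<partial>lborel)
      + ennreal (4 powr a) * (\<integral>\<^sup>+t. g3 t \<partial>lborel)"
    by (simp add: nn_integral_add nn_integral_cmult)
  also have "\<dots> \<le> ennreal (R powr (- a)) * ennreal (2 * (R powr (1 - a) / (1 - a)))
      + ennreal (R powr (- a)) * ennreal (2 * (R powr (1 - a) / (1 - a)))
      + ennreal (4 powr a) * ennreal (2 * (R powr (1 - 2 * a) / (2 * a - 1)))"
  proof (intro add_mono mult_left_mono)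
    show "(\<integral>\<^sup>+t. g1 t \<partial>lborel) \<le> ennreal (2 * (R powr (1 - a) / (1 - a)))"
      unfolding g1_def using nn_integral_abs_powr_near_le[of a R 0] a R by simp
    show "(\<integral>\<^sup>+t. g2 t \<partial>lborel) \<le> ennreal (2 * (R powr (1 - a) / (1 - a)))"
      unfolding g2_def using nn_integral_abs_powr_near_le[of a R x] a R by simp
    show "(\<integral>\<^sup>+t. g3 t \<partial>lborel) \<le> ennreal (2 * (R powr (1 - 2 * a) / (2 * a - 1)))"
      unfolding g3_def using nn_integral_abs_powr_far_le[of "2 * a" R] a R by simp
  qed auto
  also have "\<dots> = ennreal (R powr (1 - 2 * a) * (4 / (1 - a)) + 4 powr a * (2 * (R powr (1 - 2 * a) / (2 * a - 1))))"
  proof -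
    have "R powr (- a) * R powr (1 - a) = R powr (1 - 2 * a)"
      using powr_add[of R "- a" "1 - a"] by simp
    hence "R powr (- a) * (2 * (R powr (1 - a) / (1 - a))) = R powr (1 - 2 * a) * (2 / (1 - a))"
      by (simp add: field_simps)
    thus ?thesis using a R
      by (simp add: ennreal_mult[symmetric] ennreal_plus[symmetric] del: ennreal_plus)
  qed
  finally show ?thesis .
qed

lemma bracket_conv_le_far:
  assumes a: "1/2 < a" "a < 1" and x: "\<bar>x\<bar> > 2"
  shows "bracket_conv a x \<le> ennreal (4 * (4 / (1 - a) + 8 / (2 * a - 1)) * jb x powr (1 - 2 * a))"
proof -
  define R where "R = \<bar>x\<bar> / 2"
  have "jb x \<le> 4 * R" using jb_le_1_plus_abs[of x] x unfolding R_def by linarith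
  hence "R powr (1 - 2 * a) \<le> (jb x / 4) powr (1 - 2 * a)" using a jb_pos[of x] by (intro powr_mono2') auto
  also have "\<dots> = 4 powr (2 * a - 1) * jb x powr (1 - 2 * a)"
    by (simp add: powr_divide powr_minus_divide divide_simps powr_diff)
  also have "\<dots> \<le> 4 * jb x powr (1 - 2 * a)"
    using powr_mono[of "2 * a - 1" 1 4] a by (intro mult_right_mono) auto
  finally have Rb: "R powr (1 - 2 * a) \<le> 4 * jb x powr (1 - 2 * a)" .
  have "R powr (1 - 2 * a) * (4 / (1 - a)) + 4 powr a * (2 * (R powr (1 - 2 * a) / (2 * a - 1)))
      \<le> R powr (1 - 2 * a) * (4 / (1 - a)) + 4 * (2 * (R powr (1 - 2 * a) / (2 * a - 1)))"
    using powr_mono[of a 1 4] a by (intro add_left_mono mult_right_mono) auto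
  also have "\<dots> = R powr (1 - 2 * a) * (4 / (1 - a) + 8 / (2 * a - 1))" by (simp add: field_simps)
  also have "\<dots> \<le> 4 * jb x powr (1 - 2 * a) * (4 / (1 - a) + 8 / (2 * a - 1))"
    using Rb a by (intro mult_right_mono) auto
  finally show ?thesis
    using bracket_conv_le_far_powr[OF a x] unfolding R_def by (simp only: mult_ac) (meson ennreal_leI order_trans)
qed

lemma bracket_conv_const_ge:
  assumes a: "1/2 < a" "a < 1"
  shows "9 * (2 + 2 / (2 * a - 1)) \<le> bracket_conv_const a"
    and "4 * (4 / (1 - a) + 8 / (2 * a - 1)) \<le> bracket_conv_const a"
proof -
  have "0 \<le> 9 * (2 + 2 / (2 * a - 1))" "0 \<le> 4 * (4 / (1 - a) + 8 / (2 * a - 1))" using a by auto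
  thus "9 * (2 + 2 / (2 * a - 1)) \<le> bracket_conv_const a" "4 * (4 / (1 - a) + 8 / (2 * a - 1)) \<le> bracket_conv_const a"
    unfolding bracket_conv_const_def by linarith+
qed

lemma bracket_conv_le:
  assumes a: "1/2 < a" "a < 1"
  shows "bracket_conv a x \<le> ennreal (bracket_conv_const a * jb x powr (1 - 2 * a))"
proof (cases "\<bar>x\<bar> \<le> 2")
  case True
  have "3 * jb x powr (1 - 2 * a) \<ge> 1"
  proof -
    have "jb x \<le> 3" using jb_le_1_plus_abs[of x] True by linarith
    hence "3 powr (1 - 2 * a) \<le> jb x powr (1 - 2 * a)" using a jb_pos[of x] by (intro powr_mono2') auto
    moreover have "3 powr (-1) \<le> 3 powr (1 - 2 * a)" using a by (intro powr_mono) auto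
    ultimately show ?thesis by (simp add: powr_minus)
  qed
  hence "3 * (2 + 2 / (2 * a - 1)) * 1 \<le> 3 * (2 + 2 / (2 * a - 1)) * (3 * jb x powr (1 - 2 * a))"
    using a by (intro mult_left_mono) auto
  hence "3 * (2 + 2 / (2 * a - 1)) \<le> 9 * (2 + 2 / (2 * a - 1)) * jb x powr (1 - 2 * a)"
    by (simp only: mult_1_right mult_ac)
  also have "\<dots> \<le> bracket_conv_const a * jb x powr (1 - 2 * a)"
    using bracket_conv_const_ge(1)[OF a] by (intro mult_right_mono) auto
  finally show ?thesis using bracket_conv_le_near[OF a True] order_trans ennreal_leI by blast
next
  case False
  have "4 * (4 / (1 - a) + 8 / (2 * a - 1)) * jb x powr (1 - 2 * a) \<le> bracket_conv_const a * jb x powr (1 - 2 * a)"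
    using bracket_conv_const_ge(2)[OF a] by (intro mult_right_mono) auto
  thus ?thesis using bracket_conv_le_far[OF a] False order_trans ennreal_leI by (meson not_le)
qed

lemma bracket_conv_le_const:
  assumes a: "1/2 < a" "a < 1"
  shows "bracket_conv a x \<le> ennreal (bracket_conv_const a)"
proof -
  have "jb x powr (1 - 2 * a) \<le> 1"
    using powr_mono2'[of "1 - 2 * a" 1 "jb x"] jb_ge_1[of x] a by simp
  hence "bracket_conv_const a * jb x powr (1 - 2 * a) \<le> bracket_conv_const a"
    using bracket_conv_const_pos[OF a] by (simp add: mult_left_le)
  thus ?thesis using bracket_conv_le[OF a, of x] by (meson ennreal_leI order_trans)
qed

section \<open>Lines on the curves of types (i) and (ii)\<close>

lemma is_line_param:
  assumes "is_line L"
  shows "\<exists>p1 p2 d1 d2. (d1 \<noteq> 0 \<or> d2 \<noteq> 0) \<and> (\<forall>x y. (x, y) \<in> L \<longleftrightarrow> (\<exists>t. x = p1 + t * d1 \<and> y = p2 + t * d2))"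
proof -
  obtain p d where d: "d \<noteq> (0::real \<times> real)" and L: "L = {p + t *\<^sub>R d | t. True}"
    using assms unfolding is_line_def by blast
  show ?thesis
  proof (intro exI conjI allI)
    show "fst d \<noteq> 0 \<or> snd d \<noteq> 0" using d by (cases d) (auto simp: zero_prod_def)
    show "(x, y) \<in> L \<longleftrightarrow> (\<exists>t. x = fst p + t * fst d \<and> y = snd p + t * snd d)" for x y
      unfolding L by (cases p, cases d) auto
  qed
qed

text \<open>On a line p + t d the form is a quadratic A t^2 + B t + C0 in t; constancy forces A = B = 0,
  and the identities C0 alpha + iota A = B iota' and A^2 + alpha^2 = (a^2 + b^2) |d|^4 then force
  C0 = 0, contradicting c \<noteq> 0.\<close>

lemma no_line_in_curve_i:
  assumes c: "c \<noteq> 0" and L: "is_line L" and sub: "L \<subseteq> curve_i a b c"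
  shows False
proof -
  obtain p1 p2 d1 d2 where d: "d1 \<noteq> 0 \<or> d2 \<noteq> 0"
    and mem: "\<And>x y. (x, y) \<in> L \<longleftrightarrow> (\<exists>t. x = p1 + t * d1 \<and> y = p2 + t * d2)"
    using is_line_param[OF L] by blast
  define A where "A = a * (d1\<^sup>2 - d2\<^sup>2) + 2 * b * d1 * d2"
  define B where "B = 2 * a * (p1 * d1 - p2 * d2) + 2 * b * (p1 * d2 + p2 * d1)"
  define C0 where "C0 = a * (p1\<^sup>2 - p2\<^sup>2) + 2 * b * p1 * p2"
  have on: "A * t\<^sup>2 + B * t + C0 = c" for t
  proof -
    have "(p1 + t * d1, p2 + t * d2) \<in> curve_i a b c" using mem sub by blast
    hence "a * ((p1 + t * d1)\<^sup>2 - (p2 + t * d2)\<^sup>2) + 2 * b * (p1 + t * d1) * (p2 + t * d2) = c"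
      unfolding curve_i_def by simp
    moreover have "a * ((p1 + t * d1)\<^sup>2 - (p2 + t * d2)\<^sup>2) + 2 * b * (p1 + t * d1) * (p2 + t * d2)
        = A * t\<^sup>2 + B * t + C0"
      unfolding A_def B_def C0_def by (simp add: power2_eq_square algebra_simps)
    ultimately show ?thesis by simp
  qed
  have C0: "C0 = c" using on[of 0] by simp
  have "A + B = 0" "A - B = 0" using on[of 1] on[of "-1"] C0 by simp_all
  hence A: "A = 0" and B: "B = 0" by linarith+
  define \<alpha> where "\<alpha> = 2 * a * d1 * d2 - b * (d1\<^sup>2 - d2\<^sup>2)"
  define \<iota> where "\<iota> = 2 * a * p1 * p2 - b * (p1\<^sup>2 - p2\<^sup>2)"
  define \<iota>' where "\<iota>' = a * (p1 * d2 + p2 * d1) - b * (p1 * d1 - p2 * d2)"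
  have I: "C0 * \<alpha> + \<iota> * A = B * \<iota>'"
    unfolding C0_def \<alpha>_def \<iota>_def A_def B_def \<iota>'_def by (simp add: power2_eq_square algebra_simps)
  have II: "A\<^sup>2 + \<alpha>\<^sup>2 = (a\<^sup>2 + b\<^sup>2) * (d1\<^sup>2 + d2\<^sup>2)\<^sup>2"
    unfolding A_def \<alpha>_def by (simp add: power2_eq_square algebra_simps)
  show False
  proof (cases "a = 0 \<and> b = 0")
    case True
    then show ?thesis using C0 c unfolding C0_def by simp
  next
    case False
    hence "a\<^sup>2 + b\<^sup>2 > 0" "d1\<^sup>2 + d2\<^sup>2 > 0" using d by (auto simp: sum_power2_gt_zero_iff)
    hence "(a\<^sup>2 + b\<^sup>2) * (d1\<^sup>2 + d2\<^sup>2)\<^sup>2 > 0" by (intro mult_pos_pos) auto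
    hence "\<alpha>\<^sup>2 > 0" using II A by simp
    hence "\<alpha> \<noteq> 0" by auto
    with I A B have "C0 = 0" by simp
    with C0 c show False by simp
  qed
qed

lemma three_dvd_square_iff: "(3::int) dvd m\<^sup>2 \<longleftrightarrow> 3 dvd m"
  using prime_dvd_power[of "3::int" m 2] by auto

lemma square_eq_three_square_imp_zero: "(m::int)\<^sup>2 = 3 * n\<^sup>2 \<Longrightarrow> n = 0"
proof (induction "nat \<bar>n\<bar>" arbitrary: m n rule: less_induct)
  case less
  show ?case
  proof (rule ccontr)
    assume n0: "n \<noteq> 0"
    have "3 dvd m" using less.prems three_dvd_square_iff by (metis dvd_triv_left)
    then obtain m1 where m1: "m = 3 * m1" by blast
    have e: "n\<^sup>2 = 3 * m1\<^sup>2" using less.prems unfolding m1 by (simp add: power2_eq_square)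
    hence "3 dvd n" using three_dvd_square_iff by (metis dvd_triv_left)
    then obtain n1 where n1: "n = 3 * n1" by blast
    have "m1\<^sup>2 = 3 * n1\<^sup>2" using e unfolding n1 by (simp add: power2_eq_square)
    moreover have "nat \<bar>n1\<bar> < nat \<bar>n\<bar>" using n0 n1 by auto
    ultimately have "n1 = 0" using less.hyps by blast
    thus False using n1 n0 by simp
  qed
qed

definition curve_ii_poly :: "real \<Rightarrow> real \<Rightarrow> real \<Rightarrow> real \<Rightarrow> real" where
  "curve_ii_poly a b x y = (x + a) * (x\<^sup>2 - y\<^sup>2) - 2 * (y + b) * x * y"

text \<open>The coefficient of s^2 in curve_ii_poly a b (x + s) (y + r s).\<close>

definition curve_ii_quad_coeff :: "real \<Rightarrow> real \<Rightarrow> real \<Rightarrow> real \<Rightarrow> real \<Rightarrow> real" where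
  "curve_ii_quad_coeff a b x y r = 3 * (x * (1 - r\<^sup>2) - 2 * y * r) + a * (1 - r\<^sup>2) - 2 * b * r"

lemma mem_curve_ii_iff: "(x, y) \<in> curve_ii a b \<longleftrightarrow> curve_ii_poly a b x y = 0"
  unfolding curve_ii_def curve_ii_poly_def by auto

text \<open>Along a direction (1, r) the cubic coefficient of curve_ii_poly is 1 - 3 r^2, and along (0, 1)
  the quadratic and linear coefficients force x0 = 0 and a = 0.\<close>

lemma line_in_curve_ii:
  assumes L: "is_line L" and sub: "L \<subseteq> curve_ii a b" and P: "(x0, y0) \<in> L"
  shows "(x0 = 0 \<and> a = 0) \<or> (\<exists>r. 3 * r\<^sup>2 = 1 \<and> curve_ii_quad_coeff a b x0 y0 r = 0)"
proof -
  obtain p1 p2 d1 d2 where d: "d1 \<noteq> 0 \<or> d2 \<noteq> 0"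
    and mem: "\<And>x y. (x, y) \<in> L \<longleftrightarrow> (\<exists>t. x = p1 + t * d1 \<and> y = p2 + t * d2)"
    using is_line_param[OF L] by blast
  obtain t0 where t0: "x0 = p1 + t0 * d1" "y0 = p2 + t0 * d2" using P mem by blast
  have onL: "curve_ii_poly a b (x0 + s * d1) (y0 + s * d2) = 0" for s
  proof -
    have "(x0 + s * d1, y0 + s * d2) \<in> L"
      using t0 by (intro iffD2[OF mem] exI[of _ "t0 + s"]) (auto simp: algebra_simps)
    thus ?thesis using sub mem_curve_ii_iff by blast
  qed
  show ?thesis
  proof (cases "d1 = 0")
    case True
    hence d2: "d2 \<noteq> 0" using d by simp
    have h: "curve_ii_poly a b x0 (y0 + s) = 0" for s using onL[of "s / d2"] True d2 by simp
    define e2 where "e2 = - 3 * x0 - a"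
    define e1 where "e1 = - 6 * x0 * y0 - 2 * a * y0 - 2 * b * x0"
    have ex: "curve_ii_poly a b x0 (y0 + s) = e2 * s\<^sup>2 + e1 * s + curve_ii_poly a b x0 y0" for s
      unfolding e2_def e1_def curve_ii_poly_def by (simp add: power2_eq_square algebra_simps)
    have "e2 + e1 = 0" "e2 - e1 = 0" using h[of 0] h[of 1] h[of "-1"] ex[of 1] ex[of "-1"] by simp_all
    hence "e2 = 0" "e1 = 0" by linarith+
    hence a: "a = - 3 * x0" unfolding e2_def by simp
    have bx: "b * x0 = 0" using \<open>e1 = 0\<close> unfolding e1_def a by (simp add: algebra_simps)
    have "curve_ii_poly a b x0 y0 = - 2 * x0 ^ 3 - 2 * (b * x0) * y0"
      unfolding curve_ii_poly_def a by (simp add: power2_eq_square power3_eq_cube algebra_simps)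
    hence "x0 = 0" using h[of 0] bx by simp
    thus ?thesis using a by simp
  next
    case False
    define r where "r = d2 / d1"
    have g: "curve_ii_poly a b (x0 + s) (y0 + r * s) = 0" for s
      using onL[of "s / d1"] False by (simp add: r_def mult.commute)
    define c1 where "c1 = 3 * x0\<^sup>2 - 3 * (2 * r * x0 * y0 + y0\<^sup>2) + a * (2 * x0 - 2 * r * y0) - 2 * b * (r * x0 + y0)"
    define c2 where "c2 = curve_ii_quad_coeff a b x0 y0 r"
    have ex: "curve_ii_poly a b (x0 + s) (y0 + r * s) = (1 - 3 * r\<^sup>2) * s ^ 3 + c2 * s\<^sup>2 + c1 * s + curve_ii_poly a b x0 y0" for s
      unfolding c1_def c2_def curve_ii_quad_coeff_def curve_ii_poly_def
      by (simp add: power2_eq_square power3_eq_cube algebra_simps)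
    define X where "X = 1 - 3 * r\<^sup>2"
    have "X + c2 + c1 = 0" "- X + c2 - c1 = 0" "8 * X + 4 * c2 + 2 * c1 = 0"
      using g[of 0] g[of 1] g[of "-1"] g[of 2] ex[of 1] ex[of "-1"] ex[of 2] unfolding X_def by simp_all
    hence "c2 = 0" "X = 0" by linarith+
    hence "c2 = 0" "1 - 3 * r\<^sup>2 = 0" unfolding X_def by simp_all
    thus ?thesis unfolding c2_def by auto
  qed
qed

lemma curve_ii_quad_coeff_inj:
  fixes x y x' y' :: int
  assumes r: "3 * r\<^sup>2 = 1"
    and "curve_ii_quad_coeff a b (real_of_int x) (real_of_int y) r = 0"
    and "curve_ii_quad_coeff a b (real_of_int x') (real_of_int y') r = 0"
  shows "x = x' \<and> y = y'"
proof -
  define m where "m = x - x'"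
  define n where "n = y - y'"
  have "3 * (real_of_int m * (1 - r\<^sup>2) - 2 * real_of_int n * r) = 0"
    using assms(2,3) unfolding curve_ii_quad_coeff_def m_def n_def by (simp add: algebra_simps)
  moreover have "1 - r\<^sup>2 = 2 / 3" using r by simp
  ultimately have "real_of_int m = 3 * r * real_of_int n" by (simp add: algebra_simps)
  hence "(real_of_int m)\<^sup>2 = 3 * (3 * r\<^sup>2) * (real_of_int n)\<^sup>2" by (simp add: power2_eq_square)
  hence "real_of_int (m\<^sup>2) = real_of_int (3 * n\<^sup>2)" using r by simp
  hence "m\<^sup>2 = 3 * n\<^sup>2" by (simp only: of_int_eq_iff)
  moreover from this have "n = 0" by (rule square_eq_three_square_imp_zero)
  ultimately have "n = 0" "m = 0" by simp_all
  thus ?thesis unfolding m_def n_def by simp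
qed

text \<open>Only the slopes r = 1/sqrt 3 and r = -1/sqrt 3 can occur, and for each of them
  curve_ii_quad_coeff vanishes at no more than one lattice point because sqrt 3 is irrational.\<close>

lemma card_line_points_curve_ii_le:
  fixes a b :: real
  defines "E \<equiv> {w::int \<times> int. (\<exists>L. is_line L \<and> L \<subseteq> curve_ii a b \<and> (real_of_int (fst w), real_of_int (snd w)) \<in> L)
                  \<and> \<not> (fst w = 0 \<and> a = 0)}"
  shows "finite E" and "card E \<le> 2"
proof -
  define \<rho> where "\<rho> = sqrt (1 / 3 :: real)"
  define S where "S r = {w::int \<times> int. curve_ii_quad_coeff a b (real_of_int (fst w)) (real_of_int (snd w)) r = 0}" for r
  have r3: "3 * \<rho>\<^sup>2 = 1" "3 * (- \<rho>)\<^sup>2 = 1" unfolding \<rho>_def by simp_all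
  have S: "finite (S r) \<and> card (S r) \<le> 1" if "3 * r\<^sup>2 = 1" for r
  proof (cases "S r = {}")
    case False
    then obtain w where w: "w \<in> S r" by blast
    hence "S r = {w}"
      using curve_ii_quad_coeff_inj[OF that] by (auto simp: S_def prod_eq_iff)
    thus ?thesis by simp
  qed simp
  have sub: "E \<subseteq> S \<rho> \<union> S (- \<rho>)"
  proof
    fix w assume "w \<in> E"
    then obtain L where L: "is_line L" "L \<subseteq> curve_ii a b" "(real_of_int (fst w), real_of_int (snd w)) \<in> L"
      and ax: "\<not> (fst w = 0 \<and> a = 0)" unfolding E_def by blast
    obtain r where r: "3 * r\<^sup>2 = 1" "curve_ii_quad_coeff a b (real_of_int (fst w)) (real_of_int (snd w)) r = 0"
      using line_in_curve_ii[OF L] ax by auto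
    have "r\<^sup>2 = \<rho>\<^sup>2" using r(1) r3(1) by simp
    hence "r = \<rho> \<or> r = - \<rho>" by (simp add: power2_eq_iff)
    thus "w \<in> S \<rho> \<union> S (- \<rho>)" using r(2) unfolding S_def by auto
  qed
  show "finite E" using sub S[OF r3(1)] S[OF r3(2)] by (meson finite_Un finite_subset)
  have "card E \<le> card (S \<rho> \<union> S (- \<rho>))" using sub S[OF r3(1)] S[OF r3(2)] by (intro card_mono) auto
  also have "\<dots> \<le> card (S \<rho>) + card (S (- \<rho>))" by (rule card_Un_le)
  finally show "card E \<le> 2" using S[OF r3(1)] S[OF r3(2)] by linarith
qed

section \<open>The resonance function and the counting estimates\<close>

definition phi_int :: "int \<times> int \<Rightarrow> int" where
  "phi_int k = fst k ^ 3 - 3 * fst k * (snd k)\<^sup>2"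

definition psi :: "int \<times> int \<Rightarrow> int \<times> int \<Rightarrow> int" where
  "psi k k1 = phi_int k1 + phi_int (k - k1)"

text \<open>In complex notation qform k w = Re (k w^2) and phi_int k = Re (k^3).\<close>

definition qform :: "int \<times> int \<Rightarrow> int \<times> int \<Rightarrow> int" where
  "qform k w = fst k * ((fst w)\<^sup>2 - (snd w)\<^sup>2) - 2 * snd k * fst w * snd w"

definition centered :: "int \<times> int \<Rightarrow> int \<times> int \<Rightarrow> int \<times> int" where
  "centered k k1 = (2 * fst k1 - fst k, 2 * snd k1 - snd k)"

definition resonant :: "int \<times> int \<Rightarrow> int \<times> int \<Rightarrow> bool" where
  "resonant k k1 \<longleftrightarrow> qform k (centered k k1) = 0"

text \<open>The pairs (k1, k - k1) kept by the factor 1 - delta(xi, 0) delta(xi1, 0) in the definition of Q.\<close>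

definition Q_support :: "int \<times> int \<Rightarrow> int \<times> int \<Rightarrow> bool" where
  "Q_support k k1 \<longleftrightarrow> \<not> (fst k = 0 \<and> fst k1 = 0)"

definition tile :: "int \<Rightarrow> int \<times> int \<Rightarrow> (int \<times> int) set" where
  "tile M j = {k1. (fst k1 div M, snd k1 div M) = j}"

lemma phi_eq_phi_int: "phi (fst k) (snd k) = real_of_int (phi_int k)"
  unfolding phi_def phi_int_def by simp

lemma four_psi_eq: "4 * psi k k1 = phi_int k + 3 * qform k (centered k k1)"
  unfolding psi_def phi_int_def qform_def centered_def
  by (simp add: power2_eq_square power3_eq_cube algebra_simps)

lemma int_div_eq_iff:
  fixes M x q :: int
  assumes M: "M > 0"
  shows "x div M = q \<longleftrightarrow> M * q \<le> x \<and> x \<le> M * q + M - 1"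
proof
  assume "x div M = q"
  hence "x = M * q + x mod M" using div_mult_mod_eq[of x M] by (simp add: mult.commute)
  moreover have "0 \<le> x mod M" "x mod M < M" using M by simp_all
  ultimately show "M * q \<le> x \<and> x \<le> M * q + M - 1" by linarith
next
  assume "M * q \<le> x \<and> x \<le> M * q + M - 1"
  hence "(x - M * q) div M = 0" by (simp add: div_pos_pos_trivial)
  moreover have "x = (x - M * q) + q * M" by simp
  ultimately show "x div M = q" using M by (metis div_mult_self3 add.commute add_0 less_irrefl)
qed

lemma tile_eq:
  "M > 0 \<Longrightarrow> tile M j = {M * fst j..M * fst j + M - 1} \<times> {M * snd j..M * snd j + M - 1}"
  unfolding tile_def by (auto simp: int_div_eq_iff prod_eq_iff)

lemma finite_tile: "M > 0 \<Longrightarrow> finite (tile M j)"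
  by (simp add: tile_eq)

lemma card_tile: "M > 0 \<Longrightarrow> card (tile M j) = nat M * nat M"
  by (simp add: tile_eq card_cartesian_product)

lemma finite_counted_points: "finite (counted_points (square x0 y0 N) C)"
proof (rule finite_subset)
  have "counted_points (square x0 y0 N) C \<subseteq> {k. (real_of_int (fst k), real_of_int (snd k)) \<in> square x0 y0 N}"
    unfolding counted_points_def by auto
  also have "\<dots> \<subseteq> {\<lceil>x0\<rceil>..\<lfloor>x0 + N\<rfloor>} \<times> {\<lceil>y0\<rceil>..\<lfloor>y0 + N\<rfloor>}"
    unfolding square_def by (auto simp: ceiling_le_iff le_floor_iff)
  finally show "counted_points (square x0 y0 N) C \<subseteq> {\<lceil>x0\<rceil>..\<lfloor>x0 + N\<rfloor>} \<times> {\<lceil>y0\<rceil>..\<lfloor>y0 + N\<rfloor>}" .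
qed auto

lemma of_int_mem_square_iff:
  "(real_of_int m, real_of_int n) \<in> square (real_of_int x0) (real_of_int y0) (real_of_int N)
     \<longleftrightarrow> x0 \<le> m \<and> m \<le> x0 + N \<and> y0 \<le> n \<and> n \<le> y0 + N"
  unfolding square_def by (simp flip: of_int_add)

text \<open>By four_psi_eq, k1 \<mapsto> centered k k1 maps a level set psi k k1 = n off resonance into a
  type (i) curve with nonzero right-hand side, and such a curve contains no line.\<close>

lemma card_level_set_tile_le:
  fixes M :: int and k j :: "int \<times> int" and n :: int
  assumes M: "M \<ge> 1"
  defines "c \<equiv> (4 * real_of_int n - real_of_int (phi_int k)) / 3"
  shows "card {k1 \<in> tile M j. \<not> resonant k k1 \<and> psi k k1 = n}
     \<le> card (counted_points (square (real_of_int (2 * M * fst j - fst k)) (real_of_int (2 * M * snd j - snd k)) (real_of_int (2 * M)))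
              (curve_i (real_of_int (fst k)) (- real_of_int (snd k)) c))"
  (is "card ?X \<le> card ?C")
proof (rule card_inj_on_le)
  show "inj_on (centered k) ?X" unfolding inj_on_def centered_def by auto
  show "finite ?C" by (rule finite_counted_points)
  show "centered k ` ?X \<subseteq> ?C"
  proof
    fix w assume "w \<in> centered k ` ?X"
    then obtain k1 where k1: "k1 \<in> tile M j" "\<not> resonant k k1" "psi k k1 = n" and w: "w = centered k k1"
      by auto
    have "M * fst j \<le> fst k1" "fst k1 \<le> M * fst j + M - 1" "M * snd j \<le> snd k1" "snd k1 \<le> M * snd j + M - 1"
      using k1(1) M unfolding tile_eq[of M j, OF order.strict_trans2[OF zero_less_one M]] by auto
    hence sq: "(real_of_int (fst w), real_of_int (snd w)) \<in> square (real_of_int (2 * M * fst j - fst k)) (real_of_int (2 * M * snd j - snd k)) (real_of_int (2 * M))"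
      unfolding of_int_mem_square_iff w centered_def by simp
    have "3 * qform k w = 4 * n - phi_int k" using four_psi_eq[of k k1] k1(3) w by simp
    hence "real_of_int (3 * qform k w) = real_of_int (4 * n - phi_int k)" by (rule arg_cong)
    hence qf: "real_of_int (qform k w) = c" unfolding c_def by simp
    hence c: "c \<noteq> 0" using k1(2) w unfolding resonant_def by simp
    have cu: "(real_of_int (fst w), real_of_int (snd w)) \<in> curve_i (real_of_int (fst k)) (- real_of_int (snd k)) c"
      using qf unfolding curve_i_def qform_def by (simp add: algebra_simps)
    show "w \<in> ?C"
      using sq cu no_line_in_curve_i[OF c] unfolding counted_points_def by (cases w) auto
  qed
qed

text \<open>On the resonant set, w = centered k k1 satisfies Re ((w - 2 k1) w^2) = 0, a type (ii) curve.\<close>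

lemma card_resonant_le:
  fixes k1 :: "int \<times> int" and m :: nat
  shows "card {k. \<bar>fst k\<bar> \<le> 2 ^ m \<and> \<bar>snd k\<bar> \<le> 2 ^ m \<and> resonant k k1 \<and> Q_support k k1}
    \<le> card (counted_points (square (real_of_int (2 * fst k1 - 2 ^ m)) (real_of_int (2 * snd k1 - 2 ^ m)) (2 ^ (m + 1)))
          (curve_ii (- 2 * real_of_int (fst k1)) (- 2 * real_of_int (snd k1)))) + 2"
  (is "card ?Y \<le> card ?C + 2")
proof -
  define a where "a = - 2 * real_of_int (fst k1)"
  define b where "b = - 2 * real_of_int (snd k1)"
  define E where "E = {w::int \<times> int. (\<exists>L. is_line L \<and> L \<subseteq> curve_ii a b \<and> (real_of_int (fst w), real_of_int (snd w)) \<in> L)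
                  \<and> \<not> (fst w = 0 \<and> a = 0)}"
  have E: "finite E" "card E \<le> 2" unfolding E_def by (rule card_line_points_curve_ii_le)+
  have img: "(\<lambda>k. centered k k1) ` ?Y \<subseteq> ?C \<union> E"
  proof
    fix w assume "w \<in> (\<lambda>k. centered k k1) ` ?Y"
    then obtain k where k: "\<bar>fst k\<bar> \<le> 2 ^ m" "\<bar>snd k\<bar> \<le> 2 ^ m" "resonant k k1" "Q_support k k1"
      and w: "w = centered k k1" by auto
    have w1: "fst k = 2 * fst k1 - fst w" and w2: "snd k = 2 * snd k1 - snd w"
      using w by (auto simp: centered_def)
    have sq: "(real_of_int (fst w), real_of_int (snd w)) \<in> square (real_of_int (2 * fst k1 - 2 ^ m)) (real_of_int (2 * snd k1 - 2 ^ m)) (2 ^ (m + 1))"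
      using of_int_mem_square_iff[of "fst w" "snd w" "2 * fst k1 - 2 ^ m" "2 * snd k1 - 2 ^ m" "2 ^ (m + 1)"] k w1 w2
      by auto
    have "curve_ii_poly a b (real_of_int (fst w)) (real_of_int (snd w)) = - real_of_int (qform k w)"
      unfolding curve_ii_poly_def qform_def a_def b_def w1 w2 by (simp add: power2_eq_square algebra_simps)
    hence cu: "(real_of_int (fst w), real_of_int (snd w)) \<in> curve_ii a b"
      using k(3) w unfolding mem_curve_ii_iff resonant_def by simp
    have "\<not> (fst w = 0 \<and> a = 0)" using k(4) w1 unfolding Q_support_def a_def by auto
    thus "w \<in> ?C \<union> E"
      using sq cu unfolding counted_points_def E_def a_def b_def by (cases w) auto
  qed
  have "card ?Y = card ((\<lambda>k. centered k k1) ` ?Y)"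
    by (rule card_image[symmetric]) (auto simp: inj_on_def centered_def prod_eq_iff)
  also have "\<dots> \<le> card (?C \<union> E)" using img E finite_counted_points by (intro card_mono) auto
  also have "\<dots> \<le> card ?C + card E" by (rule card_Un_le)
  finally show ?thesis using E by linarith
qed

section \<open>Sums over a countable index set\<close>

abbreviation nn_sum :: "('a \<Rightarrow> ennreal) \<Rightarrow> ennreal" where
  "nn_sum f \<equiv> nn_integral (count_space UNIV) f"

lemma measurable_nn_sum:
  fixes h :: "'i::countable \<Rightarrow> 'a \<Rightarrow> ennreal"
  assumes h: "\<And>i. h i \<in> borel_measurable M"
  shows "(\<lambda>x. nn_sum (\<lambda>i. h i x)) \<in> borel_measurable M"
proof -
  interpret S: sigma_finite_measure "count_space (UNIV :: 'i set)"
    by (rule sigma_finite_measure_count_space)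
  have "(\<lambda>x. h (snd x) (fst x)) \<in> borel_measurable (M \<Otimes>\<^sub>M count_space UNIV)"
  proof (rule measurable_compose_countable'[where g = snd and I = UNIV and f = "\<lambda>i x. h i (fst x)"])
    fix i :: 'i show "(\<lambda>x. h i (fst x)) \<in> borel_measurable (M \<Otimes>\<^sub>M count_space UNIV)"
      using h[of i] by measurable
  qed auto
  hence "case_prod (\<lambda>x i. h i x) \<in> borel_measurable (M \<Otimes>\<^sub>M count_space UNIV)"
    by (simp add: case_prod_beta')
  thus ?thesis by (rule S.borel_measurable_nn_integral)
qed

lemma nn_integral_nn_sum_swap:
  fixes h :: "'i::countable \<Rightarrow> 'a \<Rightarrow> ennreal"
  assumes "\<And>i. h i \<in> borel_measurable M"
  shows "(\<integral>\<^sup>+x. nn_sum (\<lambda>i. h i x) \<partial>M) = nn_sum (\<lambda>i. \<integral>\<^sup>+x. h i x \<partial>M)"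
  by (rule nn_integral_count_space_nn_integral) (use assms in auto)

lemma nn_sum_swap:
  fixes h :: "'i::countable \<Rightarrow> 'j::countable \<Rightarrow> ennreal"
  shows "nn_sum (\<lambda>j. nn_sum (\<lambda>i. h i j)) = nn_sum (\<lambda>i. nn_sum (\<lambda>j. h i j))"
  by (rule nn_integral_count_space_nn_integral) auto

lemma nn_sum_ge: "f x \<le> nn_sum f"
proof -
  have "f x = (\<integral>\<^sup>+y. f y * indicator {x} y \<partial>count_space UNIV)" by simp
  also have "\<dots> \<le> nn_sum f" by (intro nn_integral_mono) (auto simp: indicator_def)
  finally show ?thesis .
qed

lemma nn_sum_cmult: "nn_sum (\<lambda>x. c * f x) = c * nn_sum f"
  by (rule nn_integral_cmult) simp

lemma nn_sum_regroup:
  fixes g :: "'a::countable \<Rightarrow> ennreal" and h :: "'a \<Rightarrow> 'b::countable"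
  shows "nn_sum g = nn_sum (\<lambda>j. nn_sum (\<lambda>x. if h x = j then g x else 0))"
proof -
  have "nn_sum (\<lambda>j. nn_sum (\<lambda>x. if h x = j then g x else 0)) = nn_sum (\<lambda>x. nn_sum (\<lambda>j. if h x = j then g x else 0))"
    by (rule nn_sum_swap)
  also have "\<dots> = nn_sum g"
  proof (intro nn_integral_cong)
    fix x
    have "(\<lambda>j. if h x = j then g x else 0) = (\<lambda>j. g x * indicator {h x} j)"
      by (auto simp: indicator_def)
    thus "nn_sum (\<lambda>j. if h x = j then g x else 0) = g x" by simp
  qed
  finally show ?thesis by simp
qed

lemma nn_sum_reindex_diff: "nn_sum (\<lambda>k1. g (k - k1)) = nn_sum g"
  for k :: "'a::{countable, ab_group_add}"
proof -
  have "bij_betw (\<lambda>k1. k - k1) UNIV UNIV"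
    by (rule bij_betwI[where g = "\<lambda>k1. k - k1"]) auto
  thus ?thesis by (rule nn_integral_bij_count_space)
qed

lemma nn_sum_reindex_diff_left: "nn_sum (\<lambda>k. g (k - k1)) = nn_sum g"
  for k1 :: "'a::{countable, ab_group_add}"
proof -
  have "bij_betw (\<lambda>k. k - k1) UNIV UNIV"
    by (rule bij_betwI[where g = "\<lambda>k. k + k1"]) auto
  thus ?thesis by (rule nn_integral_bij_count_space)
qed

lemma nn_sum_finite_support:
  assumes X: "finite X" and h: "\<And>x. h x \<ge> 0"
  shows "nn_sum (\<lambda>x. if x \<in> X then ennreal (h x) else 0) = ennreal (\<Sum>x\<in>X. h x)"
proof -
  have "nn_sum (\<lambda>x. if x \<in> X then ennreal (h x) else 0) = nn_sum (\<lambda>x. ennreal (h x) * indicator X x)"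
    by (intro nn_integral_cong) (auto simp: indicator_def)
  also have "\<dots> = (\<integral>\<^sup>+x. ennreal (h x) \<partial>count_space X)"
    by (simp add: nn_integral_count_space_indicator)
  also have "\<dots> = (\<Sum>x\<in>X. ennreal (h x))" by (rule nn_integral_count_space_finite[OF X])
  also have "\<dots> = ennreal (\<Sum>x\<in>X. h x)" using h by (simp add: sum_ennreal)
  finally show ?thesis .
qed

lemma nn_sum_geometric_le:
  fixes f :: "nat \<Rightarrow> real"
  assumes f: "\<And>m. f m \<le> K * q ^ m" and q: "0 \<le> q" "q < 1" and K: "K \<ge> 0"
  shows "nn_sum (\<lambda>m. ennreal (f m)) \<le> ennreal (K / (1 - q))"
proof -
  have "nn_sum (\<lambda>m. ennreal (f m)) \<le> nn_sum (\<lambda>m. ennreal (K * q ^ m))"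
    by (intro nn_integral_mono ennreal_leI f)
  also have "\<dots> = (\<Sum>m. ennreal (K * q ^ m))" by (rule nn_integral_count_space_nat)
  also have "\<dots> = ennreal (K / (1 - q))"
  proof (rule suminf_ennreal_eq)
    show "(\<lambda>m. K * q ^ m) sums (K / (1 - q))"
      using sums_mult[OF geometric_sums[of q], of K] q by (simp add: divide_simps)
  qed (use q K in auto)
  finally show ?thesis .
qed

lemma Cauchy_Schwarz_nn_sum_integral:
  fixes f g :: "'i::countable \<Rightarrow> real \<Rightarrow> ennreal"
  assumes f: "\<And>i. f i \<in> borel_measurable lborel" and g: "\<And>i. g i \<in> borel_measurable lborel"
  shows "(nn_sum (\<lambda>i. \<integral>\<^sup>+t. f i t * g i t \<partial>lborel))\<^sup>2
    \<le> nn_sum (\<lambda>i. \<integral>\<^sup>+t. (f i t)\<^sup>2 \<partial>lborel) * nn_sum (\<lambda>i. \<integral>\<^sup>+t. (g i t)\<^sup>2 \<partial>lborel)"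
proof -
  let ?N = "count_space (UNIV :: 'i set) \<Otimes>\<^sub>M lborel"
  have mf: "(\<lambda>x. f (fst x) (snd x)) \<in> borel_measurable ?N"
    by (rule measurable_pair_measure_countable1[where f = "\<lambda>x. f (fst x) (snd x)", simplified]) (use f in simp)
  have mg: "(\<lambda>x. g (fst x) (snd x)) \<in> borel_measurable ?N"
    by (rule measurable_pair_measure_countable1[where f = "\<lambda>x. g (fst x) (snd x)", simplified]) (use g in simp)
  have e: "nn_sum (\<lambda>i. \<integral>\<^sup>+t. H i t \<partial>lborel) = (\<integral>\<^sup>+x. H (fst x) (snd x) \<partial>?N)"
    if "(\<lambda>x. H (fst x) (snd x)) \<in> borel_measurable ?N" for H :: "'i \<Rightarrow> real \<Rightarrow> ennreal"
    using lborel.nn_integral_fst[OF that] by simp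
  have "nn_sum (\<lambda>i. \<integral>\<^sup>+t. f i t * g i t \<partial>lborel) = (\<integral>\<^sup>+x. f (fst x) (snd x) * g (fst x) (snd x) \<partial>?N)"
    by (rule e) (use mf mg in measurable)
  moreover have "nn_sum (\<lambda>i. \<integral>\<^sup>+t. (f i t)\<^sup>2 \<partial>lborel) = (\<integral>\<^sup>+x. (f (fst x) (snd x))\<^sup>2 \<partial>?N)"
    by (rule e) (use mf in measurable)
  moreover have "nn_sum (\<lambda>i. \<integral>\<^sup>+t. (g i t)\<^sup>2 \<partial>lborel) = (\<integral>\<^sup>+x. (g (fst x) (snd x))\<^sup>2 \<partial>?N)"
    by (rule e) (use mg in measurable)
  ultimately show ?thesis using Cauchy_Schwarz_nn_integral[OF mf mg] by simp
qed

lemma nn_integral_convolution: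
  fixes A B :: "real \<Rightarrow> ennreal"
  assumes [measurable]: "A \<in> borel_measurable borel" "B \<in> borel_measurable borel"
  shows "(\<integral>\<^sup>+\<tau>. (\<integral>\<^sup>+t. A t * B (\<tau> - t) \<partial>lborel) \<partial>lborel) = (\<integral>\<^sup>+t. A t \<partial>lborel) * (\<integral>\<^sup>+t. B t \<partial>lborel)"
proof -
  have "(\<integral>\<^sup>+\<tau>. (\<integral>\<^sup>+t. A t * B (\<tau> - t) \<partial>lborel) \<partial>lborel) = (\<integral>\<^sup>+t. (\<integral>\<^sup>+\<tau>. A t * B (\<tau> - t) \<partial>lborel) \<partial>lborel)"
    by (rule lborel_pair.Fubini') measurable
  also have "\<dots> = (\<integral>\<^sup>+t. A t * (\<integral>\<^sup>+\<tau>. B \<tau> \<partial>lborel) \<partial>lborel)"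
  proof (intro nn_integral_cong)
    fix t
    have "(\<integral>\<^sup>+\<tau>. A t * B (\<tau> - t) \<partial>lborel) = A t * (\<integral>\<^sup>+\<tau>. B (\<tau> - t) \<partial>lborel)"
      by (rule nn_integral_cmult) measurable
    also have "(\<integral>\<^sup>+\<tau>. B (\<tau> - t) \<partial>lborel) = (\<integral>\<^sup>+\<tau>. B \<tau> \<partial>lborel)"
      by (rule nn_integral_lborel_translate) measurable
    finally show "(\<integral>\<^sup>+\<tau>. A t * B (\<tau> - t) \<partial>lborel) = A t * (\<integral>\<^sup>+\<tau>. B \<tau> \<partial>lborel)" .
  qed
  also have "\<dots> = (\<integral>\<^sup>+t. A t \<partial>lborel) * (\<integral>\<^sup>+t. B t \<partial>lborel)"
    by (rule nn_integral_multc) measurable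
  finally show ?thesis .
qed

section \<open>The bilinear form and weighted Cauchy--Schwarz\<close>

definition phase :: "int \<times> int \<Rightarrow> real" where
  "phase k = real_of_int (phi_int k)"

lemma phase_add_phase: "phase k1 + phase (k - k1) = real_of_int (psi k k1)"
  unfolding phase_def psi_def by simp

text \<open>With F = profile b u and G = profile b v (defined below) this dominates the modulus of
  Q u v at (k, tau), restricted to the pairs (k1, k - k1) allowed by P.\<close>

definition conv_form :: "(int \<times> int \<Rightarrow> int \<times> int \<Rightarrow> bool) \<Rightarrow> real \<Rightarrow> (int \<times> int \<Rightarrow> real \<Rightarrow> real)
    \<Rightarrow> (int \<times> int \<Rightarrow> real \<Rightarrow> real) \<Rightarrow> int \<times> int \<Rightarrow> real \<Rightarrow> ennreal" where
  "conv_form P b F G k \<tau> = nn_sum (\<lambda>k1. \<integral>\<^sup>+t. (if P k k1 then ennreal (F k1 t * jb (t - phase k1) powr (- b)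
      * G (k - k1) (\<tau> - t) * jb (\<tau> - t - phase (k - k1)) powr (- b)) else 0) \<partial>lborel)"

definition l2_sq :: "(int \<times> int \<Rightarrow> real \<Rightarrow> real) \<Rightarrow> int \<times> int \<Rightarrow> ennreal" where
  "l2_sq F k = (\<integral>\<^sup>+t. ennreal ((F k t)\<^sup>2) \<partial>lborel)"

definition l2_norm :: "(int \<times> int \<Rightarrow> real \<Rightarrow> real) \<Rightarrow> int \<times> int \<Rightarrow> real" where
  "l2_norm F k = sqrt (enn2real (l2_sq F k))"

definition weighted_conv_sq :: "(int \<times> int \<Rightarrow> int \<times> int \<Rightarrow> bool) \<Rightarrow> (int \<times> int \<Rightarrow> real)
    \<Rightarrow> (int \<times> int \<Rightarrow> real \<Rightarrow> real) \<Rightarrow> (int \<times> int \<Rightarrow> real \<Rightarrow> real) \<Rightarrow> int \<times> int \<Rightarrow> real \<Rightarrow> ennreal" where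
  "weighted_conv_sq P \<nu> F G k \<tau> = nn_sum (\<lambda>k1. if P k k1
      then \<integral>\<^sup>+t. ennreal ((F k1 t / \<nu> k1)\<^sup>2 * (G (k - k1) (\<tau> - t))\<^sup>2) \<partial>lborel else 0)"

lemma l2_sq_finite: "nn_sum (l2_sq F) < \<infinity> \<Longrightarrow> l2_sq F k < \<infinity>"
  using nn_sum_ge[of "l2_sq F" k] by (simp add: top.not_eq_extremum)

lemma l2_norm_sq: "l2_sq F k < \<infinity> \<Longrightarrow> ennreal ((l2_norm F k)\<^sup>2) = l2_sq F k"
  unfolding l2_norm_def by (cases "l2_sq F k") auto

lemma AE_zero_if_l2_sq_zero:
  assumes "F k \<in> borel_measurable borel" and "l2_sq F k = 0"
  shows "AE t in lborel. F k t = 0"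
proof -
  have "AE t in lborel. ennreal ((F k t)\<^sup>2) = 0"
    using assms unfolding l2_sq_def by (subst (asm) nn_integral_0_iff_AE) auto
  thus ?thesis by eventually_elim simp
qed

lemma nn_integral_normalized:
  assumes "F k \<in> borel_measurable borel"
  shows "(\<integral>\<^sup>+t. ennreal ((F k t / \<nu>)\<^sup>2) \<partial>lborel) = ennreal (1 / \<nu>\<^sup>2) * l2_sq F k"
proof -
  have "(\<integral>\<^sup>+t. ennreal ((F k t / \<nu>)\<^sup>2) \<partial>lborel) = (\<integral>\<^sup>+t. ennreal (1 / \<nu>\<^sup>2) * ennreal ((F k t)\<^sup>2) \<partial>lborel)"
    by (intro nn_integral_cong) (auto simp: power_divide ennreal_mult[symmetric])
  also have "\<dots> = ennreal (1 / \<nu>\<^sup>2) * l2_sq F k"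
    unfolding l2_sq_def by (rule nn_integral_cmult) (use assms in measurable)
  finally show ?thesis .
qed

lemma normalized_mass_le_1:
  assumes "\<nu> \<noteq> 0 \<Longrightarrow> M \<le> ennreal (\<nu>\<^sup>2)"
  shows "ennreal (1 / \<nu>\<^sup>2) * M \<le> 1"
proof (cases "\<nu> = 0")
  case False
  hence "ennreal (1 / \<nu>\<^sup>2) * M \<le> ennreal (1 / \<nu>\<^sup>2) * ennreal (\<nu>\<^sup>2)"
    using assms by (intro mult_left_mono) auto
  also have "\<dots> = 1" using False by (simp add: ennreal_mult[symmetric])
  finally show ?thesis .
qed simp

lemma nn_integral_weighted_bracket_sq:
  assumes "\<nu> \<ge> 0"
  shows "(\<integral>\<^sup>+t. (ennreal (\<nu> * (jb (t - \<alpha>) powr (- b) * jb (\<tau> - t - \<beta>) powr (- b))))\<^sup>2 \<partial>lborel)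
    = ennreal (\<nu>\<^sup>2) * bracket_conv (2 * b) (\<tau> - \<alpha> - \<beta>)"
proof -
  have sq: "(z powr (- b))\<^sup>2 = z powr (- (2 * b))" for z :: real
    by (simp add: power2_eq_square powr_add[symmetric])
  have "(ennreal (\<nu> * (jb (t - \<alpha>) powr (- b) * jb (\<tau> - t - \<beta>) powr (- b))))\<^sup>2
      = ennreal (\<nu>\<^sup>2) * ennreal (jb (t - \<alpha>) powr (- (2 * b)) * jb (\<tau> - t - \<beta>) powr (- (2 * b)))" for t
  proof -
    have "(ennreal (\<nu> * (jb (t - \<alpha>) powr (- b) * jb (\<tau> - t - \<beta>) powr (- b))))\<^sup>2
        = ennreal ((\<nu> * (jb (t - \<alpha>) powr (- b) * jb (\<tau> - t - \<beta>) powr (- b)))\<^sup>2)"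
      using assms by (intro ennreal_power) simp
    also have "(\<nu> * (jb (t - \<alpha>) powr (- b) * jb (\<tau> - t - \<beta>) powr (- b)))\<^sup>2
        = \<nu>\<^sup>2 * (jb (t - \<alpha>) powr (- (2 * b)) * jb (\<tau> - t - \<beta>) powr (- (2 * b)))"
      by (simp add: power_mult_distrib sq)
    also have "ennreal \<dots> = ennreal (\<nu>\<^sup>2) * ennreal (jb (t - \<alpha>) powr (- (2 * b)) * jb (\<tau> - t - \<beta>) powr (- (2 * b)))"
      by (intro ennreal_mult) auto
    finally show ?thesis .
  qed
  hence "(\<integral>\<^sup>+t. (ennreal (\<nu> * (jb (t - \<alpha>) powr (- b) * jb (\<tau> - t - \<beta>) powr (- b))))\<^sup>2 \<partial>lborel)
      = ennreal (\<nu>\<^sup>2) * (\<integral>\<^sup>+t. ennreal (jb (t - \<alpha>) powr (- (2 * b)) * jb (\<tau> - t - \<beta>) powr (- (2 * b))) \<partial>lborel)"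
    by (simp add: nn_integral_cmult)
  thus ?thesis by (simp only: bracket_conv_shift)
qed

text \<open>Cauchy-Schwarz in (k1, t) after writing the integrand as
  (nu k1 <t - phi k1>^-b <tau - t - phi (k - k1)>^-b) (F k1 t / nu k1) G (k - k1) (tau - t).\<close>

lemma conv_form_sq_le:
  fixes P :: "int \<times> int \<Rightarrow> int \<times> int \<Rightarrow> bool" and F G :: "int \<times> int \<Rightarrow> real \<Rightarrow> real" and \<nu> :: "int \<times> int \<Rightarrow> real"
  assumes Fn: "\<And>k t. F k t \<ge> 0" and Gn: "\<And>k t. G k t \<ge> 0"
    and Fm: "\<And>k. F k \<in> borel_measurable borel" and Gm: "\<And>k. G k \<in> borel_measurable borel"
    and \<nu>n: "\<And>k. \<nu> k \<ge> 0" and \<nu>0: "\<And>k. \<nu> k = 0 \<Longrightarrow> AE t in lborel. F k t = 0"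
  shows "(conv_form P b F G k \<tau>)\<^sup>2
    \<le> nn_sum (\<lambda>k1. if P k k1 then ennreal ((\<nu> k1)\<^sup>2) * bracket_conv (2 * b) (\<tau> - real_of_int (psi k k1)) else 0)
      * weighted_conv_sq P \<nu> F G k \<tau>"
proof -
  define W where "W k1 t = jb (t - phase k1) powr (- b) * jb (\<tau> - t - phase (k - k1)) powr (- b)" for k1 t
  define f where "f k1 t = (if P k k1 then ennreal (\<nu> k1 * W k1 t) else 0)" for k1 t
  define g where "g k1 t = (if P k k1 then ennreal (F k1 t / \<nu> k1 * G (k - k1) (\<tau> - t)) else 0)" for k1 t
  have W0: "W k1 t \<ge> 0" for k1 t unfolding W_def by simp
  have fm: "f k1 \<in> borel_measurable lborel" for k1 unfolding f_def W_def by measurable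
  have gm: "g k1 \<in> borel_measurable lborel" for k1
    unfolding g_def using Fm[of k1] Gm[of "k - k1"] by measurable
  have eq: "conv_form P b F G k \<tau> = nn_sum (\<lambda>k1. \<integral>\<^sup>+t. f k1 t * g k1 t \<partial>lborel)"
    unfolding conv_form_def
  proof (rule nn_integral_cong)
    fix k1
    have "AE t in lborel. (if P k k1 then ennreal (F k1 t * jb (t - phase k1) powr (- b)
        * G (k - k1) (\<tau> - t) * jb (\<tau> - t - phase (k - k1)) powr (- b)) else 0) = f k1 t * g k1 t"
    proof (cases "\<nu> k1 = 0")
      case True
      from \<nu>0[OF True] show ?thesis by eventually_elim (simp add: f_def g_def True)
    next
      case False
      have "F k1 t * jb (t - phase k1) powr (- b) * G (k - k1) (\<tau> - t) * jb (\<tau> - t - phase (k - k1)) powr (- b)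
          = (\<nu> k1 * W k1 t) * (F k1 t / \<nu> k1 * G (k - k1) (\<tau> - t))" for t
        using False unfolding W_def by (simp add: field_simps)
      thus ?thesis
        unfolding f_def g_def using \<nu>n[of k1] Fn Gn W0 by (simp add: ennreal_mult[symmetric] del: ennreal_mult)
    qed
    thus "(\<integral>\<^sup>+t. (if P k k1 then ennreal (F k1 t * jb (t - phase k1) powr (- b)
        * G (k - k1) (\<tau> - t) * jb (\<tau> - t - phase (k - k1)) powr (- b)) else 0) \<partial>lborel)
      = (\<integral>\<^sup>+t. f k1 t * g k1 t \<partial>lborel)"
      by (rule nn_integral_cong_AE)
  qed
  have f2: "(\<integral>\<^sup>+t. (f k1 t)\<^sup>2 \<partial>lborel)
      = (if P k k1 then ennreal ((\<nu> k1)\<^sup>2) * bracket_conv (2 * b) (\<tau> - real_of_int (psi k k1)) else 0)" for k1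
  proof (cases "P k k1")
    case True
    have "(\<integral>\<^sup>+t. (f k1 t)\<^sup>2 \<partial>lborel) = ennreal ((\<nu> k1)\<^sup>2) * bracket_conv (2 * b) (\<tau> - phase k1 - phase (k - k1))"
      unfolding f_def W_def using True by (simp add: nn_integral_weighted_bracket_sq[OF \<nu>n])
    also have "\<tau> - phase k1 - phase (k - k1) = \<tau> - real_of_int (psi k k1)"
      using phase_add_phase[of k1 k] by simp
    finally show ?thesis using True by simp
  qed (simp add: f_def)
  have g2: "(\<integral>\<^sup>+t. (g k1 t)\<^sup>2 \<partial>lborel)
      = (if P k k1 then \<integral>\<^sup>+t. ennreal ((F k1 t / \<nu> k1)\<^sup>2 * (G (k - k1) (\<tau> - t))\<^sup>2) \<partial>lborel else 0)" for k1
    unfolding g_def using Fn Gn \<nu>n[of k1] by (simp add: ennreal_power power_mult_distrib power_divide)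
  show ?thesis
    unfolding eq weighted_conv_sq_def using Cauchy_Schwarz_nn_sum_integral[of f g, OF fm gm] f2 g2 by simp
qed

lemma measurable_weighted_conv_sq:
  assumes "\<And>k. F k \<in> borel_measurable borel" and "\<And>k. G k \<in> borel_measurable borel"
  shows "weighted_conv_sq P \<nu> F G k \<in> borel_measurable lborel"
  unfolding weighted_conv_sq_def
proof (rule measurable_nn_sum)
  fix k1
  show "(\<lambda>\<tau>. if P k k1 then \<integral>\<^sup>+t. ennreal ((F k1 t / \<nu> k1)\<^sup>2 * (G (k - k1) (\<tau> - t))\<^sup>2) \<partial>lborel else 0)
      \<in> borel_measurable lborel"
    using assms(1)[of k1] assms(2)[of "k - k1"] by measurable
qed

lemma nn_integral_weighted_conv_sq:
  assumes Fm: "\<And>k. F k \<in> borel_measurable borel" and Gm: "\<And>k. G k \<in> borel_measurable borel"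
  shows "(\<integral>\<^sup>+\<tau>. weighted_conv_sq P \<nu> F G k \<tau> \<partial>lborel)
    = nn_sum (\<lambda>k1. if P k k1 then (\<integral>\<^sup>+t. ennreal ((F k1 t / \<nu> k1)\<^sup>2) \<partial>lborel) * l2_sq G (k - k1) else 0)"
  unfolding weighted_conv_sq_def
proof (subst nn_integral_nn_sum_swap)
  fix k1
  show "(\<lambda>\<tau>. if P k k1 then \<integral>\<^sup>+t. ennreal ((F k1 t / \<nu> k1)\<^sup>2 * (G (k - k1) (\<tau> - t))\<^sup>2) \<partial>lborel else 0)
      \<in> borel_measurable lborel"
    using Fm[of k1] Gm[of "k - k1"] by measurable
next
  have "(\<integral>\<^sup>+\<tau>. (\<integral>\<^sup>+t. ennreal ((F k1 t / \<nu> k1)\<^sup>2) * ennreal ((G (k - k1) (\<tau> - t))\<^sup>2) \<partial>lborel) \<partial>lborel)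
      = (\<integral>\<^sup>+t. ennreal ((F k1 t / \<nu> k1)\<^sup>2) \<partial>lborel) * l2_sq G (k - k1)" for k1
    unfolding l2_sq_def by (rule nn_integral_convolution) (use Fm[of k1] Gm[of "k - k1"] in measurable)
  thus "nn_sum (\<lambda>k1. \<integral>\<^sup>+\<tau>. (if P k k1 then \<integral>\<^sup>+t. ennreal ((F k1 t / \<nu> k1)\<^sup>2 * (G (k - k1) (\<tau> - t))\<^sup>2) \<partial>lborel else 0) \<partial>lborel)
    = nn_sum (\<lambda>k1. if P k k1 then (\<integral>\<^sup>+t. ennreal ((F k1 t / \<nu> k1)\<^sup>2) \<partial>lborel) * l2_sq G (k - k1) else 0)"
    by (intro nn_integral_cong) (simp add: ennreal_mult)
qed

lemma nn_integral_weighted_sum_le: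
  fixes X S :: "'i::countable \<Rightarrow> real \<Rightarrow> ennreal"
  assumes pt: "\<And>k \<tau>. X k \<tau> \<le> c k * S k \<tau>" and Sm: "\<And>k. S k \<in> borel_measurable lborel"
  shows "(\<integral>\<^sup>+\<tau>. nn_sum (\<lambda>k. w k * X k \<tau>) \<partial>lborel) \<le> nn_sum (\<lambda>k. w k * c k * (\<integral>\<^sup>+\<tau>. S k \<tau> \<partial>lborel))"
proof -
  have "(\<integral>\<^sup>+\<tau>. nn_sum (\<lambda>k. w k * X k \<tau>) \<partial>lborel) \<le> (\<integral>\<^sup>+\<tau>. nn_sum (\<lambda>k. w k * c k * S k \<tau>) \<partial>lborel)"
    by (intro nn_integral_mono) (use pt in \<open>simp add: mult.assoc mult_left_mono\<close>)
  also have "\<dots> = nn_sum (\<lambda>k. \<integral>\<^sup>+\<tau>. w k * c k * S k \<tau> \<partial>lborel)"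
    by (rule nn_integral_nn_sum_swap) (use Sm in measurable)
  also have "\<dots> = nn_sum (\<lambda>k. w k * c k * (\<integral>\<^sup>+\<tau>. S k \<tau> \<partial>lborel))"
    by (intro nn_integral_cong nn_integral_cmult) (use Sm in auto)
  finally show ?thesis .
qed

section \<open>The resonant part\<close>

lemma nn_sum_swap_weighted_le:
  fixes w :: "'a::countable \<Rightarrow> ennreal" and a :: "'b::countable \<Rightarrow> ennreal"
  assumes "\<And>k1. nn_sum (\<lambda>k. if P k k1 then w k else 0) \<le> C"
  shows "nn_sum (\<lambda>k. w k * nn_sum (\<lambda>k1. if P k k1 then a k1 else 0)) \<le> C * nn_sum a"
proof -
  have "nn_sum (\<lambda>k. w k * nn_sum (\<lambda>k1. if P k k1 then a k1 else 0))
      = nn_sum (\<lambda>k. nn_sum (\<lambda>k1. if P k k1 then w k * a k1 else 0))"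
    unfolding nn_sum_cmult[symmetric] by (intro nn_integral_cong) auto
  also have "\<dots> = nn_sum (\<lambda>k1. nn_sum (\<lambda>k. if P k k1 then w k * a k1 else 0))"
    by (rule nn_sum_swap)
  also have "\<dots> = nn_sum (\<lambda>k1. a k1 * nn_sum (\<lambda>k. if P k k1 then w k else 0))"
    unfolding nn_sum_cmult[symmetric] by (intro nn_integral_cong) (auto simp: mult.commute)
  also have "\<dots> \<le> nn_sum (\<lambda>k1. a k1 * C)"
    using assms by (intro nn_integral_mono mult_left_mono) auto
  also have "\<dots> = C * nn_sum a" by (simp add: nn_sum_cmult[symmetric] mult.commute)
  finally show ?thesis .
qed

lemma nn_integral_weighted_conv_sq_l2_norm_le:
  assumes Fm: "\<And>k. F k \<in> borel_measurable borel" and Gm: "\<And>k. G k \<in> borel_measurable borel"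
    and XF: "nn_sum (l2_sq F) < \<infinity>"
  shows "(\<integral>\<^sup>+\<tau>. weighted_conv_sq P (l2_norm F) F G k \<tau> \<partial>lborel) \<le> nn_sum (l2_sq G)"
proof -
  have normalized: "(\<integral>\<^sup>+t. ennreal ((F k1 t / l2_norm F k1)\<^sup>2) \<partial>lborel) \<le> 1" for k1
  proof -
    have "(\<integral>\<^sup>+t. ennreal ((F k1 t / l2_norm F k1)\<^sup>2) \<partial>lborel) = ennreal (1 / (l2_norm F k1)\<^sup>2) * l2_sq F k1"
      by (rule nn_integral_normalized[OF Fm])
    also have "\<dots> \<le> 1"
      using l2_norm_sq[OF l2_sq_finite[OF XF], of k1] by (intro normalized_mass_le_1) simp
    finally show ?thesis .
  qed
  have "(\<integral>\<^sup>+\<tau>. weighted_conv_sq P (l2_norm F) F G k \<tau> \<partial>lborel) \<le> nn_sum (\<lambda>k1. l2_sq G (k - k1))"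
    unfolding nn_integral_weighted_conv_sq[OF Fm Gm]
  proof (intro nn_integral_mono)
    fix k1
    show "(if P k k1 then (\<integral>\<^sup>+t. ennreal ((F k1 t / l2_norm F k1)\<^sup>2) \<partial>lborel) * l2_sq G (k - k1) else 0)
        \<le> l2_sq G (k - k1)"
      using mult_right_mono[OF normalized[of k1], of "l2_sq G (k - k1)"] by auto
  qed
  thus ?thesis by (simp add: nn_sum_reindex_diff)
qed

text \<open>On the resonant set the time integral only contributes a bounded factor; the gain comes from
  the weight w, whose sum over the resonant k for fixed k1 is controlled by counting.\<close>

lemma resonant_part_le:
  fixes F G :: "int \<times> int \<Rightarrow> real \<Rightarrow> real" and w :: "int \<times> int \<Rightarrow> real"
  assumes Fn: "\<And>k t. F k t \<ge> 0" and Gn: "\<And>k t. G k t \<ge> 0"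
    and Fm: "\<And>k. F k \<in> borel_measurable borel" and Gm: "\<And>k. G k \<in> borel_measurable borel"
    and XF: "nn_sum (l2_sq F) < \<infinity>" and b: "1/4 < b" "b < 1/2"
    and HD: "\<And>k1. nn_sum (\<lambda>k. if Q_support k k1 \<and> resonant k k1 then ennreal (w k) else 0) \<le> ennreal CD"
  shows "(\<integral>\<^sup>+\<tau>. nn_sum (\<lambda>k. ennreal (w k) * (conv_form (\<lambda>k k1. Q_support k k1 \<and> resonant k k1) b F G k \<tau>)\<^sup>2) \<partial>lborel)
     \<le> ennreal (bracket_conv_const (2 * b)) * ennreal CD * nn_sum (l2_sq F) * nn_sum (l2_sq G)"
proof -
  define P where "P k k1 \<longleftrightarrow> Q_support k k1 \<and> resonant k k1" for k k1
  define CJ where "CJ = ennreal (bracket_conv_const (2 * b))"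
  define mass where "mass k = nn_sum (\<lambda>k1. if P k k1 then l2_sq F k1 else 0)" for k
  have a: "1/2 < 2 * b" "2 * b < 1" using b by auto
  have fin: "l2_sq F k < \<infinity>" for k using l2_sq_finite[OF XF] .
  have pt: "(conv_form P b F G k \<tau>)\<^sup>2 \<le> (CJ * mass k) * weighted_conv_sq P (l2_norm F) F G k \<tau>" for k \<tau>
  proof -
    have "nn_sum (\<lambda>k1. if P k k1 then ennreal ((l2_norm F k1)\<^sup>2) * bracket_conv (2 * b) (\<tau> - real_of_int (psi k k1)) else 0)
        \<le> nn_sum (\<lambda>k1. CJ * (if P k k1 then l2_sq F k1 else 0))"
      using bracket_conv_le_const[OF a] l2_norm_sq[OF fin] unfolding CJ_def
      by (intro nn_integral_mono) (auto simp: mult.commute intro: mult_left_mono)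
    also have "\<dots> = CJ * mass k" unfolding mass_def by (rule nn_sum_cmult)
    finally have A: "nn_sum (\<lambda>k1. if P k k1 then ennreal ((l2_norm F k1)\<^sup>2)
        * bracket_conv (2 * b) (\<tau> - real_of_int (psi k k1)) else 0) \<le> CJ * mass k" .
    have "(conv_form P b F G k \<tau>)\<^sup>2 \<le> nn_sum (\<lambda>k1. if P k k1 then ennreal ((l2_norm F k1)\<^sup>2)
        * bracket_conv (2 * b) (\<tau> - real_of_int (psi k k1)) else 0) * weighted_conv_sq P (l2_norm F) F G k \<tau>"
    proof (rule conv_form_sq_le[OF Fn Gn Fm Gm])
      fix k1 assume "l2_norm F k1 = 0"
      thus "AE t in lborel. F k1 t = 0"
        using l2_norm_sq[OF fin, of k1] by (intro AE_zero_if_l2_sq_zero[OF Fm]) simp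
    qed (simp add: l2_norm_def)
    also have "\<dots> \<le> (CJ * mass k) * weighted_conv_sq P (l2_norm F) F G k \<tau>"
      by (rule mult_right_mono[OF A zero_le])
    finally show ?thesis .
  qed
  have "(\<integral>\<^sup>+\<tau>. nn_sum (\<lambda>k. ennreal (w k) * (conv_form P b F G k \<tau>)\<^sup>2) \<partial>lborel)
      \<le> nn_sum (\<lambda>k. ennreal (w k) * (CJ * mass k) * (\<integral>\<^sup>+\<tau>. weighted_conv_sq P (l2_norm F) F G k \<tau> \<partial>lborel))"
    by (rule nn_integral_weighted_sum_le[OF pt measurable_weighted_conv_sq[OF Fm Gm]])
  also have "\<dots> \<le> nn_sum (\<lambda>k. ennreal (w k) * (CJ * mass k) * nn_sum (l2_sq G))"
    by (intro nn_integral_mono mult_left_mono nn_integral_weighted_conv_sq_l2_norm_le[OF Fm Gm XF]) auto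
  also have "\<dots> = CJ * nn_sum (l2_sq G) * nn_sum (\<lambda>k. ennreal (w k) * mass k)"
    by (subst nn_sum_cmult[symmetric]) (simp add: mult_ac)
  also have "\<dots> \<le> CJ * nn_sum (l2_sq G) * (ennreal CD * nn_sum (l2_sq F))"
    unfolding mass_def P_def by (intro mult_left_mono nn_sum_swap_weighted_le HD) auto
  finally show ?thesis unfolding P_def CJ_def by (simp add: mult_ac)
qed

section \<open>Dyadic scales and tiles\<close>

definition dyadic_scale :: "int \<times> int \<Rightarrow> nat" where
  "dyadic_scale k = (LEAST m. \<bar>fst k\<bar> \<le> 2 ^ m \<and> \<bar>snd k\<bar> \<le> 2 ^ m)"

lemma dyadic_scale_exists:
  fixes k :: "int \<times> int"
  shows "\<exists>m. \<bar>fst k\<bar> \<le> 2 ^ m \<and> \<bar>snd k\<bar> \<le> (2::int) ^ m"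
proof -
  define n where "n = nat (\<bar>fst k\<bar> + \<bar>snd k\<bar>)"
  have "int n \<le> 2 ^ n" using less_exp[of n] by (metis of_nat_less_iff of_nat_numeral of_nat_power less_imp_le)
  moreover have "\<bar>fst k\<bar> \<le> int n" "\<bar>snd k\<bar> \<le> int n" unfolding n_def by auto
  ultimately show ?thesis by (meson order_trans)
qed

lemma dyadic_scale_le: "\<bar>fst k\<bar> \<le> 2 ^ dyadic_scale k \<and> \<bar>snd k\<bar> \<le> 2 ^ dyadic_scale k"
  unfolding dyadic_scale_def by (rule LeastI_ex[OF dyadic_scale_exists])

lemma jb2_ge: "\<bar>real_of_int a\<bar> \<le> jb2 a b" "\<bar>real_of_int b\<bar> \<le> jb2 a b" "1 \<le> jb2 a b"
  unfolding jb2_def by (simp_all add: real_le_rsqrt)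

lemma dyadic_scale_le_jb2: "2 ^ dyadic_scale k / 2 \<le> jb2 (fst k) (snd k)"
proof (cases "dyadic_scale k = 0")
  case True
  thus ?thesis using jb2_ge(3)[where a = "fst k" and b = "snd k"] by simp
next
  case False
  hence "\<not> (\<bar>fst k\<bar> \<le> 2 ^ (dyadic_scale k - 1) \<and> \<bar>snd k\<bar> \<le> 2 ^ (dyadic_scale k - 1))"
    unfolding dyadic_scale_def by (intro not_less_Least) simp
  hence "real_of_int (2 ^ (dyadic_scale k - 1)) < real_of_int \<bar>fst k\<bar>
      \<or> real_of_int (2 ^ (dyadic_scale k - 1)) < real_of_int \<bar>snd k\<bar>"
    by (simp only: of_int_less_iff not_le de_Morgan_conj)
  hence "(2::real) ^ (dyadic_scale k - 1) \<le> \<bar>real_of_int (fst k)\<bar> \<or> (2::real) ^ (dyadic_scale k - 1) \<le> \<bar>real_of_int (snd k)\<bar>"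
    by auto
  hence "(2::real) ^ (dyadic_scale k - 1) \<le> jb2 (fst k) (snd k)"
    using jb2_ge[where a = "fst k" and b = "snd k"] by linarith
  moreover have "(2::real) ^ dyadic_scale k / 2 = 2 ^ (dyadic_scale k - 1)"
    using False by (simp add: power_diff)
  ultimately show ?thesis by simp
qed

definition tile_index :: "nat \<Rightarrow> int \<times> int \<Rightarrow> int \<times> int" where
  "tile_index m k1 = (fst k1 div 2 ^ m, snd k1 div 2 ^ m)"

definition tile_sq :: "(int \<times> int \<Rightarrow> real \<Rightarrow> real) \<Rightarrow> nat \<Rightarrow> int \<times> int \<Rightarrow> ennreal" where
  "tile_sq F m j = nn_sum (\<lambda>k1. if tile_index m k1 = j then l2_sq F k1 else 0)"

definition tile_norm :: "(int \<times> int \<Rightarrow> real \<Rightarrow> real) \<Rightarrow> nat \<Rightarrow> int \<times> int \<Rightarrow> real" where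
  "tile_norm F m k1 = sqrt (enn2real (tile_sq F m (tile_index m k1)))"

definition diff_box :: "nat \<Rightarrow> int \<times> int \<Rightarrow> (int \<times> int) set" where
  "diff_box m j = {k2. - (2 ^ m) * (fst j + 2) \<le> fst k2 \<and> fst k2 \<le> - (2 ^ m) * (fst j - 1)
                \<and> - (2 ^ m) * (snd j + 2) \<le> snd k2 \<and> snd k2 \<le> - (2 ^ m) * (snd j - 1)}"

lemma nn_sum_tile_sq: "nn_sum (tile_sq F m) = nn_sum (l2_sq F)"
  unfolding tile_sq_def by (rule nn_sum_regroup[symmetric])

lemma l2_sq_le_tile_sq: "l2_sq F k1 \<le> tile_sq F m (tile_index m k1)"
  unfolding tile_sq_def using nn_sum_ge[of "\<lambda>k. if tile_index m k = tile_index m k1 then l2_sq F k else 0" k1] by simp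

lemma tile_sq_finite: "nn_sum (l2_sq F) < \<infinity> \<Longrightarrow> tile_sq F m j < \<infinity>"
  using nn_sum_ge[of "tile_sq F m" j] nn_sum_tile_sq[of F m] by (simp add: top.not_eq_extremum)

lemma tile_norm_sq: "nn_sum (l2_sq F) < \<infinity> \<Longrightarrow> ennreal ((tile_norm F m k1)\<^sup>2) = tile_sq F m (tile_index m k1)"
  unfolding tile_norm_def using tile_sq_finite[of F m "tile_index m k1"] by (cases "tile_sq F m (tile_index m k1)") auto

lemma nn_sum_tile_normalized_le_1:
  assumes Fm: "\<And>k. F k \<in> borel_measurable borel" and XF: "nn_sum (l2_sq F) < \<infinity>"
  shows "nn_sum (\<lambda>k1. if tile_index m k1 = j then \<integral>\<^sup>+t. ennreal ((F k1 t / tile_norm F m k1)\<^sup>2) \<partial>lborel else 0) \<le> 1"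
proof -
  define \<nu> where "\<nu> = sqrt (enn2real (tile_sq F m j))"
  have "nn_sum (\<lambda>k1. if tile_index m k1 = j then \<integral>\<^sup>+t. ennreal ((F k1 t / tile_norm F m k1)\<^sup>2) \<partial>lborel else 0)
      = nn_sum (\<lambda>k1. ennreal (1 / \<nu>\<^sup>2) * (if tile_index m k1 = j then l2_sq F k1 else 0))"
  proof (intro nn_integral_cong)
    fix k1
    show "(if tile_index m k1 = j then \<integral>\<^sup>+t. ennreal ((F k1 t / tile_norm F m k1)\<^sup>2) \<partial>lborel else 0)
        = ennreal (1 / \<nu>\<^sup>2) * (if tile_index m k1 = j then l2_sq F k1 else 0)"
      using nn_integral_normalized[of F k1 "tile_norm F m k1", OF Fm] unfolding tile_norm_def \<nu>_def by auto
  qed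
  also have "\<dots> = ennreal (1 / \<nu>\<^sup>2) * tile_sq F m j" unfolding tile_sq_def by (rule nn_sum_cmult)
  also have "\<dots> \<le> 1"
    using tile_sq_finite[OF XF, of m j] unfolding \<nu>_def by (intro normalized_mass_le_1) (cases "tile_sq F m j"; simp)
  finally show ?thesis .
qed

lemma div_window:
  fixes M x :: int
  assumes M: "M > 0"
  shows "{j1. - M * (j1 + 2) \<le> x \<and> x \<le> - M * (j1 - 1)} \<subseteq> {(- x) div M - 2..(- x) div M + 1}"
proof
  fix j1 assume j: "j1 \<in> {j1. - M * (j1 + 2) \<le> x \<and> x \<le> - M * (j1 - 1)}"
  define q where "q = (- x) div M"
  have q: "M * q \<le> - x" "- x < M * q + M"
    using int_div_eq_iff[OF M, of "- x" q] unfolding q_def by auto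
  have h1: "M * (j1 - 1) \<le> - x" "- x \<le> M * (j1 + 2)" using j by (auto simp: algebra_simps)
  have "M * (j1 - 1) < M * (q + 1)" using h1 q by (simp add: algebra_simps)
  hence "j1 - 1 < q + 1" using M by (simp add: mult_less_cancel_left_pos)
  moreover have "M * q \<le> M * (j1 + 2)" using q(1) h1(2) by (rule order.trans)
  hence "q \<le> j1 + 2" using M by (simp add: mult_le_cancel_left_pos)
  ultimately show "j1 \<in> {(- x) div M - 2..(- x) div M + 1}" unfolding q_def by auto
qed

lemma nn_sum_diff_box_le: "nn_sum (\<lambda>j. if k2 \<in> diff_box m j then g else 0) \<le> 16 * g"
proof -
  define M :: int where "M = 2 ^ m"
  have M: "M > 0" unfolding M_def by simp
  define A where "A = {(- fst k2) div M - 2..(- fst k2) div M + 1} \<times> {(- snd k2) div M - 2..(- snd k2) div M + 1}"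
  have sub: "{j. k2 \<in> diff_box m j} \<subseteq> A"
    using div_window[OF M, of "fst k2"] div_window[OF M, of "snd k2"]
    unfolding diff_box_def A_def M_def by auto
  have "nn_sum (\<lambda>j. if k2 \<in> diff_box m j then g else 0) \<le> nn_sum (\<lambda>j. g * indicator A j)"
    using sub by (intro nn_integral_mono) (auto simp: indicator_def)
  also have "\<dots> = g * of_nat (card A)"
    by (subst nn_integral_cmult) (auto simp: A_def)
  also have "card A = 16" unfolding A_def by (simp add: card_cartesian_product)
  finally show ?thesis by (simp add: mult.commute)
qed

lemma diff_mem_diff_box:
  assumes k: "\<bar>fst k\<bar> \<le> 2 ^ m" "\<bar>snd k\<bar> \<le> 2 ^ m"
  shows "k - k1 \<in> diff_box m (tile_index m k1)"
proof -
  define M :: int where "M = 2 ^ m"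
  have M: "M > 0" unfolding M_def by simp
  have "M * (fst k1 div M) \<le> fst k1" "fst k1 \<le> M * (fst k1 div M) + M - 1"
       "M * (snd k1 div M) \<le> snd k1" "snd k1 \<le> M * (snd k1 div M) + M - 1"
    using int_div_eq_iff[OF M, of "fst k1" "fst k1 div M"] int_div_eq_iff[OF M, of "snd k1" "snd k1 div M"]
    by auto
  moreover have "\<bar>fst k\<bar> \<le> M" "\<bar>snd k\<bar> \<le> M" using k unfolding M_def by auto
  ultimately show ?thesis unfolding diff_box_def tile_index_def M_def[symmetric]
    by (auto simp: algebra_simps)
qed

section \<open>The non-resonant part\<close>

text \<open>Off resonance, Cauchy-Schwarz is applied with the mass of F on the whole tile of side 2^m
  containing k1 in place of that of F k1, so that only the sum of <tau - psi>^(1-4b) over a single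
  tile has to be counted.\<close>

lemma nonresonant_kernel_le:
  fixes F :: "int \<times> int \<Rightarrow> real \<Rightarrow> real"
  assumes HL: "\<And>j. nn_sum (\<lambda>k1. if tile_index m k1 = j \<and> \<not> resonant k k1
      then ennreal (jb (\<tau> - real_of_int (psi k k1)) powr (1 - 4 * b)) else 0) \<le> ennreal L"
    and XF: "nn_sum (l2_sq F) < \<infinity>" and b: "1/4 < b" "b < 1/2"
  shows "nn_sum (\<lambda>k1. if Q_support k k1 \<and> \<not> resonant k k1
      then ennreal ((tile_norm F m k1)\<^sup>2) * bracket_conv (2 * b) (\<tau> - real_of_int (psi k k1)) else 0)
     \<le> ennreal (bracket_conv_const (2 * b)) * ennreal L * nn_sum (l2_sq F)"
proof -
  have a: "1/2 < 2 * b" "2 * b < 1" using b by auto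
  define h where "h k1 = (if \<not> resonant k k1 then ennreal (jb (\<tau> - real_of_int (psi k k1)) powr (1 - 4 * b)) else 0)" for k1
  have "nn_sum (\<lambda>k1. if Q_support k k1 \<and> \<not> resonant k k1
      then ennreal ((tile_norm F m k1)\<^sup>2) * bracket_conv (2 * b) (\<tau> - real_of_int (psi k k1)) else 0)
      \<le> nn_sum (\<lambda>k1. ennreal (bracket_conv_const (2 * b)) * (tile_sq F m (tile_index m k1) * h k1))"
  proof (intro nn_integral_mono)
    fix k1
    have J: "bracket_conv (2 * b) (\<tau> - real_of_int (psi k k1))
        \<le> ennreal (bracket_conv_const (2 * b)) * ennreal (jb (\<tau> - real_of_int (psi k k1)) powr (1 - 4 * b))"
      using bracket_conv_le[OF a, of "\<tau> - real_of_int (psi k k1)"] bracket_conv_const_pos[OF a]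
      by (simp add: ennreal_mult)
    thus "(if Q_support k k1 \<and> \<not> resonant k k1
        then ennreal ((tile_norm F m k1)\<^sup>2) * bracket_conv (2 * b) (\<tau> - real_of_int (psi k k1)) else 0)
      \<le> ennreal (bracket_conv_const (2 * b)) * (tile_sq F m (tile_index m k1) * h k1)"
      unfolding h_def tile_norm_sq[OF XF]
      using mult_left_mono[OF J, of "tile_sq F m (tile_index m k1)"] by (auto simp: mult_ac)
  qed
  also have "\<dots> = ennreal (bracket_conv_const (2 * b)) * nn_sum (\<lambda>k1. tile_sq F m (tile_index m k1) * h k1)"
    by (rule nn_sum_cmult)
  also have "nn_sum (\<lambda>k1. tile_sq F m (tile_index m k1) * h k1)
      = nn_sum (\<lambda>j. nn_sum (\<lambda>k1. if tile_index m k1 = j then tile_sq F m (tile_index m k1) * h k1 else 0))"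
    by (rule nn_sum_regroup)
  also have "\<dots> = nn_sum (\<lambda>j. tile_sq F m j * nn_sum (\<lambda>k1. if tile_index m k1 = j then h k1 else 0))"
    unfolding nn_sum_cmult[symmetric] by (intro nn_integral_cong) auto
  also have "\<dots> \<le> nn_sum (\<lambda>j. tile_sq F m j * ennreal L)"
  proof (intro nn_integral_mono mult_left_mono)
    fix j
    have "nn_sum (\<lambda>k1. if tile_index m k1 = j then h k1 else 0) = nn_sum (\<lambda>k1. if tile_index m k1 = j \<and> \<not> resonant k k1
        then ennreal (jb (\<tau> - real_of_int (psi k k1)) powr (1 - 4 * b)) else 0)"
      unfolding h_def by (intro nn_integral_cong) auto
    thus "nn_sum (\<lambda>k1. if tile_index m k1 = j then h k1 else 0) \<le> ennreal L" using HL[of j] by simp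
  qed auto
  also have "\<dots> = ennreal L * nn_sum (l2_sq F)"
    by (simp add: nn_sum_cmult mult.commute nn_sum_tile_sq)
  finally show ?thesis by (simp add: mult_left_mono mult.assoc)
qed

lemma nonresonant_conv_form_sq_le:
  fixes F G :: "int \<times> int \<Rightarrow> real \<Rightarrow> real"
  assumes Fn: "\<And>k t. F k t \<ge> 0" and Gn: "\<And>k t. G k t \<ge> 0"
    and Fm: "\<And>k. F k \<in> borel_measurable borel" and Gm: "\<And>k. G k \<in> borel_measurable borel"
    and XF: "nn_sum (l2_sq F) < \<infinity>" and b: "1/4 < b" "b < 1/2"
    and HL: "\<And>j. nn_sum (\<lambda>k1. if tile_index m k1 = j \<and> \<not> resonant k k1
      then ennreal (jb (\<tau> - real_of_int (psi k k1)) powr (1 - 4 * b)) else 0) \<le> ennreal L"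
  defines "P \<equiv> \<lambda>k k1. Q_support k k1 \<and> \<not> resonant k k1"
  shows "(conv_form P b F G k \<tau>)\<^sup>2
    \<le> (ennreal (bracket_conv_const (2 * b)) * nn_sum (l2_sq F) * ennreal L) * weighted_conv_sq P (tile_norm F m) F G k \<tau>"
proof -
  have "(conv_form P b F G k \<tau>)\<^sup>2 \<le> nn_sum (\<lambda>k1. if P k k1 then ennreal ((tile_norm F m k1)\<^sup>2)
      * bracket_conv (2 * b) (\<tau> - real_of_int (psi k k1)) else 0) * weighted_conv_sq P (tile_norm F m) F G k \<tau>"
  proof (rule conv_form_sq_le[OF Fn Gn Fm Gm])
    fix k1 assume "tile_norm F m k1 = 0"
    hence "l2_sq F k1 = 0"
      using tile_norm_sq[OF XF, of m k1] l2_sq_le_tile_sq[of F k1 m] by simp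
    thus "AE t in lborel. F k1 t = 0" by (rule AE_zero_if_l2_sq_zero[OF Fm])
  qed (simp add: tile_norm_def)
  also have "\<dots> \<le> (ennreal (bracket_conv_const (2 * b)) * nn_sum (l2_sq F) * ennreal L) * weighted_conv_sq P (tile_norm F m) F G k \<tau>"
    using nonresonant_kernel_le[OF HL XF b] unfolding P_def
    by (intro mult_right_mono) (simp_all add: mult_ac)
  finally show ?thesis .
qed

lemma nn_sum_dyadic_shell_le:
  fixes F G :: "int \<times> int \<Rightarrow> real \<Rightarrow> real"
  assumes Fm: "\<And>k. F k \<in> borel_measurable borel" and XF: "nn_sum (l2_sq F) < \<infinity>"
  shows "nn_sum (\<lambda>k. if dyadic_scale k = m then nn_sum (\<lambda>k1.
      (\<integral>\<^sup>+t. ennreal ((F k1 t / tile_norm F m k1)\<^sup>2) \<partial>lborel) * l2_sq G (k - k1)) else 0)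
    \<le> 16 * nn_sum (l2_sq G)"
proof -
  define hat where "hat k1 = (\<integral>\<^sup>+t. ennreal ((F k1 t / tile_norm F m k1)\<^sup>2) \<partial>lborel)" for k1
  define B where "B j = nn_sum (\<lambda>k2. if k2 \<in> diff_box m j then l2_sq G k2 else 0)" for j
  have "nn_sum (\<lambda>k. if dyadic_scale k = m then nn_sum (\<lambda>k1. hat k1 * l2_sq G (k - k1)) else 0)
      = nn_sum (\<lambda>k1. hat k1 * nn_sum (\<lambda>k. if dyadic_scale k = m then l2_sq G (k - k1) else 0))"
    unfolding nn_sum_cmult[symmetric] by (subst nn_sum_swap[symmetric]) (auto intro!: nn_integral_cong)
  also have "\<dots> \<le> nn_sum (\<lambda>k1. hat k1 * B (tile_index m k1))"
  proof (intro nn_integral_mono mult_left_mono)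
    fix k1
    have "nn_sum (\<lambda>k. if dyadic_scale k = m then l2_sq G (k - k1) else 0)
        \<le> nn_sum (\<lambda>k. if k - k1 \<in> diff_box m (tile_index m k1) then l2_sq G (k - k1) else 0)"
    proof (intro nn_integral_mono)
      fix k
      show "(if dyadic_scale k = m then l2_sq G (k - k1) else 0)
          \<le> (if k - k1 \<in> diff_box m (tile_index m k1) then l2_sq G (k - k1) else 0)"
        using diff_mem_diff_box[of k m k1] dyadic_scale_le[of k] by auto
    qed
    also have "\<dots> = B (tile_index m k1)"
      unfolding B_def by (rule nn_sum_reindex_diff_left[where g = "\<lambda>k2. if k2 \<in> _ then _ k2 else 0"])
    finally show "nn_sum (\<lambda>k. if dyadic_scale k = m then l2_sq G (k - k1) else 0) \<le> B (tile_index m k1)" .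
  qed simp
  also have "\<dots> = nn_sum (\<lambda>j. nn_sum (\<lambda>k1. if tile_index m k1 = j then hat k1 * B (tile_index m k1) else 0))"
    by (rule nn_sum_regroup)
  also have "\<dots> = nn_sum (\<lambda>j. B j * nn_sum (\<lambda>k1. if tile_index m k1 = j then hat k1 else 0))"
    unfolding nn_sum_cmult[symmetric] by (intro nn_integral_cong) (auto simp: mult.commute)
  also have "\<dots> \<le> nn_sum (\<lambda>j. B j * 1)"
    unfolding hat_def using nn_sum_tile_normalized_le_1[OF Fm XF] by (intro nn_integral_mono mult_left_mono) auto
  also have "\<dots> = nn_sum (\<lambda>k2. nn_sum (\<lambda>j. if k2 \<in> diff_box m j then l2_sq G k2 else 0))"
    unfolding B_def by (simp add: nn_sum_swap[of "\<lambda>k2 j. if k2 \<in> diff_box m j then l2_sq G k2 else 0"])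
  also have "\<dots> \<le> nn_sum (\<lambda>k2. 16 * l2_sq G k2)" by (intro nn_integral_mono nn_sum_diff_box_le)
  also have "\<dots> = 16 * nn_sum (l2_sq G)" by (rule nn_sum_cmult)
  finally show ?thesis unfolding hat_def .
qed

lemma nn_sum_by_scale_le:
  fixes d :: "'a::countable \<Rightarrow> nat"
  assumes "\<And>m. nn_sum (\<lambda>k. if d k = m then Z m k else 0) \<le> B"
  shows "nn_sum (\<lambda>k. a (d k) * Z (d k) k) \<le> B * nn_sum a"
proof -
  have "nn_sum (\<lambda>k. a (d k) * Z (d k) k) = nn_sum (\<lambda>m. nn_sum (\<lambda>k. if d k = m then a (d k) * Z (d k) k else 0))"
    by (rule nn_sum_regroup)
  also have "\<dots> = nn_sum (\<lambda>m. a m * nn_sum (\<lambda>k. if d k = m then Z m k else 0))"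
    unfolding nn_sum_cmult[symmetric] by (intro nn_integral_cong) auto
  also have "\<dots> \<le> nn_sum (\<lambda>m. a m * B)" using assms by (intro nn_integral_mono mult_left_mono) auto
  also have "\<dots> = B * nn_sum a" by (simp add: nn_sum_cmult[symmetric] mult.commute)
  finally show ?thesis .
qed

lemma nonresonant_part_le:
  fixes F G :: "int \<times> int \<Rightarrow> real \<Rightarrow> real" and w :: "int \<times> int \<Rightarrow> real" and L W :: "nat \<Rightarrow> real"
  assumes Fn: "\<And>k t. F k t \<ge> 0" and Gn: "\<And>k t. G k t \<ge> 0"
    and Fm: "\<And>k. F k \<in> borel_measurable borel" and Gm: "\<And>k. G k \<in> borel_measurable borel"
    and XF: "nn_sum (l2_sq F) < \<infinity>" and b: "1/4 < b" "b < 1/2"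
    and HL: "\<And>k \<tau> j. nn_sum (\<lambda>k1. if tile_index (dyadic_scale k) k1 = j \<and> \<not> resonant k k1
      then ennreal (jb (\<tau> - real_of_int (psi k k1)) powr (1 - 4 * b)) else 0) \<le> ennreal (L (dyadic_scale k))"
    and L: "\<And>m. L m \<ge> 0" and HW: "\<And>k. w k \<le> W (dyadic_scale k)"
    and HS: "nn_sum (\<lambda>m. ennreal (W m * L m)) \<le> ennreal CR"
  shows "(\<integral>\<^sup>+\<tau>. nn_sum (\<lambda>k. ennreal (w k) * (conv_form (\<lambda>k k1. Q_support k k1 \<and> \<not> resonant k k1) b F G k \<tau>)\<^sup>2) \<partial>lborel)
     \<le> ennreal (bracket_conv_const (2 * b)) * (16 * ennreal CR) * nn_sum (l2_sq F) * nn_sum (l2_sq G)"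
proof -
  define P where "P k k1 \<longleftrightarrow> Q_support k k1 \<and> \<not> resonant k k1" for k k1
  define C0 where "C0 = ennreal (bracket_conv_const (2 * b)) * nn_sum (l2_sq F)"
  define \<nu> where "\<nu> k = tile_norm F (dyadic_scale k)" for k
  define hat where "hat m k1 = (\<integral>\<^sup>+t. ennreal ((F k1 t / tile_norm F m k1)\<^sup>2) \<partial>lborel)" for m k1
  define Z where "Z m k = nn_sum (\<lambda>k1. hat m k1 * l2_sq G (k - k1))" for m k
  have pt: "(conv_form P b F G k \<tau>)\<^sup>2 \<le> (C0 * ennreal (L (dyadic_scale k))) * weighted_conv_sq P (\<nu> k) F G k \<tau>" for k \<tau>
    unfolding P_def C0_def \<nu>_def by (rule nonresonant_conv_form_sq_le[OF Fn Gn Fm Gm XF b HL])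
  have S: "(\<integral>\<^sup>+\<tau>. weighted_conv_sq P (\<nu> k) F G k \<tau> \<partial>lborel) \<le> Z (dyadic_scale k) k" for k
    unfolding nn_integral_weighted_conv_sq[OF Fm Gm] Z_def hat_def \<nu>_def
    by (intro nn_integral_mono) auto
  have "(\<integral>\<^sup>+\<tau>. nn_sum (\<lambda>k. ennreal (w k) * (conv_form P b F G k \<tau>)\<^sup>2) \<partial>lborel)
      \<le> nn_sum (\<lambda>k. ennreal (w k) * (C0 * ennreal (L (dyadic_scale k))) * (\<integral>\<^sup>+\<tau>. weighted_conv_sq P (\<nu> k) F G k \<tau> \<partial>lborel))"
    by (rule nn_integral_weighted_sum_le[OF pt measurable_weighted_conv_sq[OF Fm Gm]])
  also have "\<dots> \<le> nn_sum (\<lambda>k. C0 * (ennreal (W (dyadic_scale k) * L (dyadic_scale k)) * Z (dyadic_scale k) k))"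
  proof (intro nn_integral_mono)
    fix k
    have wL: "ennreal (w k) * ennreal (L (dyadic_scale k)) \<le> ennreal (W (dyadic_scale k) * L (dyadic_scale k))"
      using HW[of k] L[of "dyadic_scale k"]
      by (metis ennreal_leI ennreal_mult'' mult_right_mono)
    have "ennreal (w k) * (C0 * ennreal (L (dyadic_scale k))) * (\<integral>\<^sup>+\<tau>. weighted_conv_sq P (\<nu> k) F G k \<tau> \<partial>lborel)
        = C0 * ((ennreal (w k) * ennreal (L (dyadic_scale k))) * (\<integral>\<^sup>+\<tau>. weighted_conv_sq P (\<nu> k) F G k \<tau> \<partial>lborel))"
      by (simp add: mult_ac)
    also have "\<dots> \<le> C0 * (ennreal (W (dyadic_scale k) * L (dyadic_scale k)) * Z (dyadic_scale k) k)"
      by (intro mult_left_mono mult_mono wL S) auto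
    finally show "ennreal (w k) * (C0 * ennreal (L (dyadic_scale k))) * (\<integral>\<^sup>+\<tau>. weighted_conv_sq P (\<nu> k) F G k \<tau> \<partial>lborel)
        \<le> C0 * (ennreal (W (dyadic_scale k) * L (dyadic_scale k)) * Z (dyadic_scale k) k)" .
  qed
  also have "\<dots> = C0 * nn_sum (\<lambda>k. ennreal (W (dyadic_scale k) * L (dyadic_scale k)) * Z (dyadic_scale k) k)"
    by (rule nn_sum_cmult)
  also have "\<dots> \<le> C0 * (16 * nn_sum (l2_sq G) * nn_sum (\<lambda>m. ennreal (W m * L m)))"
    using nn_sum_dyadic_shell_le[OF Fm XF] unfolding Z_def hat_def
    by (intro mult_left_mono nn_sum_by_scale_le) auto
  also have "\<dots> \<le> C0 * (16 * nn_sum (l2_sq G) * ennreal CR)"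
    by (intro mult_left_mono HS) auto
  finally show ?thesis unfolding P_def C0_def by (simp add: mult_ac)
qed

section \<open>Counting at dyadic scales\<close>

definition counting_bound :: "real \<Rightarrow> real \<Rightarrow> bool" where
  "counting_bound c g \<longleftrightarrow> (\<forall>N::real. N \<ge> 1 \<longrightarrow> (\<forall>x0 y0 C. admissible_curve C \<longrightarrow>
     real (card (counted_points (square x0 y0 N) C)) \<le> c * N powr g))"

lemma counting_bound_mono:
  assumes "counting_bound c g" and "c \<le> c'"
  shows "counting_bound c' g"
  using assms unfolding counting_bound_def by (meson mult_right_mono order_trans powr_ge_zero)

lemma counting_boundD:
  "counting_bound c g \<Longrightarrow> N \<ge> 1 \<Longrightarrow> admissible_curve C \<Longrightarrow> real (card (counted_points (square x0 y0 N) C)) \<le> c * N powr g"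
  unfolding counting_bound_def by blast

lemma card_resonant_dyadic_le:
  assumes "counting_bound c g"
  shows "real (card {k. \<bar>fst k\<bar> \<le> 2 ^ m \<and> \<bar>snd k\<bar> \<le> 2 ^ m \<and> resonant k k1 \<and> Q_support k k1})
    \<le> c * (2 ^ (m + 1)) powr g + 2"
proof -
  have "real (card (counted_points (square (real_of_int (2 * fst k1 - 2 ^ m)) (real_of_int (2 * snd k1 - 2 ^ m)) (2 ^ (m + 1)))
      (curve_ii (- 2 * real_of_int (fst k1)) (- 2 * real_of_int (snd k1))))) \<le> c * (2 ^ (m + 1)) powr g"
    using one_le_power[of "2::real" "m + 1"] by (intro counting_boundD[OF assms]) (auto simp: admissible_curve_def)
  thus ?thesis using card_resonant_le[of m k1] by linarith
qed

lemma card_level_set_tile_counting_le: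
  assumes "counting_bound c g" and "c \<ge> 0" and M: "M \<ge> 1"
  shows "real (card {k1 \<in> tile M j. \<not> resonant k k1 \<and> psi k k1 = n}) \<le> c * real_of_int (2 * M) powr g"
proof (cases "4 * n = phi_int k")
  case True
  have E: "{k1 \<in> tile M j. \<not> resonant k k1 \<and> psi k k1 = n} = {}"
    using four_psi_eq[of k] True unfolding resonant_def by auto
  show ?thesis unfolding E using assms(2) by simp
next
  case False
  hence c: "(4 * real_of_int n - real_of_int (phi_int k)) / 3 \<noteq> 0"
    by (metis divide_eq_0_iff eq_iff_diff_eq_0 of_int_eq_iff of_int_mult of_int_numeral zero_neq_numeral)
  have "card {k1 \<in> tile M j. \<not> resonant k k1 \<and> psi k k1 = n}
      \<le> card (counted_points (square (real_of_int (2 * M * fst j - fst k)) (real_of_int (2 * M * snd j - snd k)) (real_of_int (2 * M)))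
              (curve_i (real_of_int (fst k)) (- real_of_int (snd k)) ((4 * real_of_int n - real_of_int (phi_int k)) / 3)))"
    by (rule card_level_set_tile_le[OF M])
  also have "real \<dots> \<le> c * real_of_int (2 * M) powr g"
  proof (rule counting_boundD[OF assms(1)])
    show "admissible_curve (curve_i (real_of_int (fst k)) (- real_of_int (snd k)) ((4 * real_of_int n - real_of_int (phi_int k)) / 3))"
      unfolding admissible_curve_def using c by blast
  qed (use M in simp)
  finally show ?thesis by simp
qed

lemma dyadic_resonant_term_le:
  fixes c g s :: real and m :: nat
  assumes c: "c \<ge> 0" and g: "g \<ge> 0"
  shows "(2 ^ m / 2) powr (2 * s) * (c * (2 ^ (m + 1)) powr g + 2)
     \<le> ((c * 2 powr g + 2) * 2 powr (- 2 * s)) * (2 powr (2 * s + g)) ^ m"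
proof -
  define x where "x = real m"
  have x0: "x \<ge> 0" unfolding x_def by simp
  define P1 where "P1 = (2::real) powr ((x - 1) * (2 * s))"
  define Qm where "Qm = (2::real) powr (x * (2 * s + g))"
  have e1: "(2 ^ m / 2 :: real) = 2 powr (x - 1)" unfolding x_def by (simp add: powr_diff powr_realpow)
  have e2: "(2 ^ (m + 1) :: real) = 2 powr (x + 1)" unfolding x_def by (simp add: powr_add powr_realpow)
  have h1: "(2 ^ m / 2) powr (2 * s) = P1" unfolding e1 P1_def by (simp only: powr_powr)
  have h2: "(2 ^ (m + 1)) powr g = (2::real) powr ((x + 1) * g)" unfolding e2 by (simp only: powr_powr)
  have h3: "(2 powr (2 * s + g)) ^ m = Qm" unfolding Qm_def x_def by (simp add: powr_power)
  have h4: "P1 * 2 powr ((x + 1) * g) = 2 powr g * 2 powr (- 2 * s) * Qm"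
    unfolding P1_def Qm_def by (simp add: powr_add[symmetric] algebra_simps)
  have h5: "P1 \<le> 2 powr (- 2 * s) * Qm"
  proof -
    have "P1 \<le> 2 powr ((- 2 * s) + x * (2 * s + g))" unfolding P1_def
      using x0 g by (intro powr_mono) (auto simp: algebra_simps)
    also have "\<dots> = 2 powr (- 2 * s) * Qm" unfolding Qm_def by (simp only: powr_add)
    finally show ?thesis .
  qed
  have "(2 ^ m / 2) powr (2 * s) * (c * (2 ^ (m + 1)) powr g + 2) = c * (P1 * 2 powr ((x + 1) * g)) + 2 * P1"
    unfolding h1 h2 by (simp add: algebra_simps)
  also have "\<dots> \<le> c * (2 powr g * 2 powr (- 2 * s) * Qm) + 2 * (2 powr (- 2 * s) * Qm)"
    unfolding h4 using h5 by simp
  also have "\<dots> = ((c * 2 powr g + 2) * 2 powr (- 2 * s)) * (2 powr (2 * s + g)) ^ m"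
    unfolding h3 by (simp add: algebra_simps)
  finally show ?thesis .
qed

text \<open>On the dyadic shell of scale m the weight is at most (2^m/2)^(2s), and there are at most
  c 2^((m + 1) g) + 2 resonant frequencies.\<close>

lemma nn_sum_resonant_weight_le:
  fixes g c s :: real and k1 :: "int \<times> int"
  assumes cnt: "counting_bound c g" and c: "c \<ge> 0" and g: "g \<ge> 0" and s: "s \<le> 0" and q: "2 * s + g < 0"
  shows "nn_sum (\<lambda>k. if Q_support k k1 \<and> resonant k k1 then ennreal (jb2 (fst k) (snd k) powr (2 * s)) else 0)
     \<le> ennreal (((c * 2 powr g + 2) * 2 powr (- 2 * s)) / (1 - 2 powr (2 * s + g)))"
proof -
  define Y where "Y m = {k. \<bar>fst k\<bar> \<le> 2 ^ m \<and> \<bar>snd k\<bar> \<le> 2 ^ m \<and> resonant k k1 \<and> Q_support k k1}" for m :: nat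
  define W where "W m = ((2::real) ^ m / 2) powr (2 * s)" for m :: nat
  have finY: "finite (Y m)" for m
    by (rule finite_subset[of _ "{- (2 ^ m)..2 ^ m} \<times> {- (2 ^ m)..2 ^ m}"]) (auto simp: Y_def abs_le_iff)
  have "nn_sum (\<lambda>k. if Q_support k k1 \<and> resonant k k1 then ennreal (jb2 (fst k) (snd k) powr (2 * s)) else 0)
      = nn_sum (\<lambda>m. nn_sum (\<lambda>k. if dyadic_scale k = m then
          (if Q_support k k1 \<and> resonant k k1 then ennreal (jb2 (fst k) (snd k) powr (2 * s)) else 0) else 0))"
    by (rule nn_sum_regroup)
  also have "\<dots> \<le> nn_sum (\<lambda>m. ennreal (W m * (c * (2 ^ (m + 1)) powr g + 2)))"
  proof (intro nn_integral_mono)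
    fix m :: nat
    have "nn_sum (\<lambda>k. if dyadic_scale k = m then
          (if Q_support k k1 \<and> resonant k k1 then ennreal (jb2 (fst k) (snd k) powr (2 * s)) else 0) else 0)
        \<le> nn_sum (\<lambda>k. ennreal (W m) * indicator (Y m) k)"
    proof (intro nn_integral_mono)
      fix k
      show "(if dyadic_scale k = m then (if Q_support k k1 \<and> resonant k k1 then ennreal (jb2 (fst k) (snd k) powr (2 * s)) else 0) else 0)
          \<le> ennreal (W m) * indicator (Y m) k"
      proof (cases "dyadic_scale k = m \<and> Q_support k k1 \<and> resonant k k1")
        case True
        have "jb2 (fst k) (snd k) powr (2 * s) \<le> W m" unfolding W_def
          using dyadic_scale_le_jb2[of k] True s by (intro powr_mono2') auto
        moreover have "k \<in> Y m" using True dyadic_scale_le[of k] unfolding Y_def by auto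
        ultimately show ?thesis using True by (simp add: ennreal_leI)
      qed auto
    qed
    also have "\<dots> = ennreal (W m) * of_nat (card (Y m))"
      by (subst nn_integral_cmult) (auto simp: finY)
    also have "\<dots> \<le> ennreal (W m * (c * (2 ^ (m + 1)) powr g + 2))"
      using card_resonant_dyadic_le[OF cnt, of m k1] unfolding Y_def[symmetric]
      by (simp add: ennreal_mult ennreal_of_nat_eq_real_of_nat W_def mult_left_mono ennreal_leI del: of_nat_power)
    finally show "nn_sum (\<lambda>k. if dyadic_scale k = m then
          (if Q_support k k1 \<and> resonant k k1 then ennreal (jb2 (fst k) (snd k) powr (2 * s)) else 0) else 0)
        \<le> ennreal (W m * (c * (2 ^ (m + 1)) powr g + 2))" .
  qed
  also have "\<dots> \<le> ennreal (((c * 2 powr g + 2) * 2 powr (- 2 * s)) / (1 - 2 powr (2 * s + g)))"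
  proof (rule nn_sum_geometric_le)
    show "W m * (c * (2 ^ (m + 1)) powr g + 2) \<le> ((c * 2 powr g + 2) * 2 powr (- 2 * s)) * (2 powr (2 * s + g)) ^ m" for m
      unfolding W_def by (rule dyadic_resonant_term_le[OF c g])
    show "2 powr (2 * s + g) < 1" using q by (simp add: powr_less_one)
  qed (use c in auto)
  finally show ?thesis .
qed

definition level_bound :: "real \<Rightarrow> real \<Rightarrow> real \<Rightarrow> nat \<Rightarrow> real" where
  "level_bound c g p m = (1 + 4 / (1 - p)) * ((c * (2 ^ (m + 1)) powr g) powr p * ((2::real) ^ m * 2 ^ m) powr (1 - p))"

text \<open>A tile of side M = 2^m has M^2 points, and each level set of psi k on it has at most
  c (2M)^g points.\<close>

lemma nn_sum_tile_level_le:
  fixes g c b \<tau> :: real and k j :: "int \<times> int"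
  assumes cnt: "counting_bound c g" and c: "c \<ge> 1" and g: "g \<ge> 0" and b: "1/4 < b" "b < 1/2"
  shows "nn_sum (\<lambda>k1. if tile_index m k1 = j \<and> \<not> resonant k k1
      then ennreal (jb (\<tau> - real_of_int (psi k k1)) powr (1 - 4 * b)) else 0)
     \<le> ennreal (level_bound c g (4 * b - 1) m)"
proof -
  define M :: int where "M = 2 ^ m"
  define p where "p = 4 * b - 1"
  define X where "X = {k1 \<in> tile M j. \<not> resonant k k1}"
  define A where "A = c * (real_of_int (2 * M)) powr g"
  define P where "P = (2::real) ^ m * 2 ^ m"
  have p: "0 < p" "p < 1" using b unfolding p_def by auto
  have M: "M \<ge> 1" unfolding M_def by simp
  have finX: "finite X" unfolding X_def using finite_tile[of M j] M by auto
  have A: "A \<ge> 1"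
  proof -
    have X: "1 \<le> real_of_int (2 * M) powr g" using M g by (simp add: ge_one_powr_ge_zero)
    show ?thesis unfolding A_def using mult_mono[OF c X] c by simp
  qed
  have lev: "real (card {x\<in>X. psi k x = n}) \<le> A" for n
    using card_level_set_tile_counting_le[OF cnt _ M, of j k n] c unfolding X_def A_def
    by (simp add: conj_assoc)
  have cX: "real (card X) \<le> P"
  proof -
    have "card X \<le> card (tile M j)" unfolding X_def using finite_tile[of M j] M by (intro card_mono) auto
    also have "\<dots> = nat M * nat M" using card_tile[of M j] M by simp
    finally have "card X \<le> 2 ^ m * 2 ^ m" unfolding M_def by (simp add: nat_power_eq)
    hence "real (card X) \<le> real (2 ^ m * 2 ^ m)" by (simp only: of_nat_le_iff)
    thus ?thesis unfolding P_def by simp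
  qed
  have "nn_sum (\<lambda>k1. if tile_index m k1 = j \<and> \<not> resonant k k1
      then ennreal (jb (\<tau> - real_of_int (psi k k1)) powr (1 - 4 * b)) else 0)
      = nn_sum (\<lambda>k1. if k1 \<in> X then ennreal (jb (\<tau> - real_of_int (psi k k1)) powr (- p)) else 0)"
    unfolding X_def tile_def tile_index_def M_def p_def by (intro nn_integral_cong) auto
  also have "\<dots> = ennreal (\<Sum>k1\<in>X. jb (\<tau> - real_of_int (psi k k1)) powr (- p))"
    by (rule nn_sum_finite_support[OF finX]) simp
  also have "\<dots> \<le> ennreal ((1 + 4 / (1 - p)) * (A powr p * P powr (1 - p)))"
    by (intro ennreal_leI sum_jb_powr_levels_le[OF finX lev cX A p])
  also have "(1 + 4 / (1 - p)) * (A powr p * P powr (1 - p)) = level_bound c g (4 * b - 1) m"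
    unfolding level_bound_def A_def P_def p_def M_def by simp
  finally show ?thesis .
qed

lemma nn_sum_dyadic_level_le:
  fixes c g p s :: real
  assumes c: "c \<ge> 1" and g: "g \<ge> 0" and p: "0 < p" "p < 1" and q: "2 * s + g + 2 * (1 - p) < 0"
  shows "nn_sum (\<lambda>m. ennreal ((2 ^ m / 2) powr (2 * s) * level_bound c g p m))
     \<le> ennreal (((1 + 4 / (1 - p)) * c * 2 powr (g - 2 * s)) / (1 - 2 powr (2 * s + g + 2 * (1 - p))))"
proof (rule nn_sum_geometric_le)
  fix m :: nat
  define x where "x = real m"
  define A where "A = c * (2 ^ (m + 1)) powr g"
  define C where "C = 1 + 4 / (1 - p)"
  have e1: "(2 ^ m / 2 :: real) = 2 powr (x - 1)" unfolding x_def by (simp add: powr_diff powr_realpow)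
  have e2: "(2 ^ (m + 1) :: real) = 2 powr (x + 1)" unfolding x_def by (simp add: powr_add powr_realpow)
  have e3: "((2::real) ^ m * 2 ^ m) = 2 powr (2 * x)" unfolding x_def by (simp add: powr_realpow[symmetric] powr_add[symmetric])
  have A: "A \<ge> 1"
  proof -
    have X: "1 \<le> ((2::real) ^ (m + 1)) powr g" using g one_le_power[of "2::real" "m + 1"] by (simp add: ge_one_powr_ge_zero)
    show ?thesis unfolding A_def using mult_mono[OF c X] c by simp
  qed
  have "(2 ^ m / 2) powr (2 * s) * level_bound c g p m = (2 ^ m / 2) powr (2 * s) * (C * (A powr p * ((2::real) ^ m * 2 ^ m) powr (1 - p)))"
    unfolding level_bound_def C_def A_def by simp
  also have "\<dots> \<le> (2 ^ m / 2) powr (2 * s) * (C * (A * ((2::real) ^ m * 2 ^ m) powr (1 - p)))"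
    using powr_mono[of p 1 A] A p unfolding C_def by (intro mult_left_mono mult_right_mono) auto
  also have "\<dots> = C * c * (2 powr ((x - 1) * (2 * s)) * 2 powr ((x + 1) * g) * 2 powr ((2 * x) * (1 - p)))"
    unfolding A_def e1 e2 e3 by (simp add: powr_powr)
  also have "\<dots> = C * c * 2 powr ((g - 2 * s) + x * (2 * s + g + 2 * (1 - p)))"
    by (simp only: powr_add[symmetric]) (simp add: algebra_simps)
  also have "\<dots> = C * c * 2 powr (g - 2 * s) * 2 powr (x * (2 * s + g + 2 * (1 - p)))"
    by (simp only: powr_add mult.assoc)
  also have "2 powr (x * (2 * s + g + 2 * (1 - p))) = ((2::real) powr (2 * s + g + 2 * (1 - p))) ^ m"
    unfolding x_def by (rule powr_power[symmetric]) simp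
  finally show "(2 ^ m / 2) powr (2 * s) * level_bound c g p m
      \<le> ((1 + 4 / (1 - p)) * c * 2 powr (g - 2 * s)) * (2 powr (2 * s + g + 2 * (1 - p))) ^ m"
    unfolding C_def .
next
  show "2 powr (2 * s + g + 2 * (1 - p)) < 1" using q by (simp add: powr_less_one)
qed (use c p in auto)

lemma conv_form_split:
  assumes Fm: "\<And>k. F k \<in> borel_measurable borel" and Gm: "\<And>k. G k \<in> borel_measurable borel"
  shows "conv_form Q_support b F G k \<tau> = conv_form (\<lambda>k k1. Q_support k k1 \<and> resonant k k1) b F G k \<tau>
    + conv_form (\<lambda>k k1. Q_support k k1 \<and> \<not> resonant k k1) b F G k \<tau>"
proof -
  define X where "X k1 t = ennreal (F k1 t * jb (t - phase k1) powr (- b) * G (k - k1) (\<tau> - t) * jb (\<tau> - t - phase (k - k1)) powr (- b))" for k1 t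
  have Xm: "X k1 \<in> borel_measurable lborel" for k1 unfolding X_def using Fm[of k1] Gm[of "k - k1"] by measurable
  have "conv_form Q_support b F G k \<tau> = nn_sum (\<lambda>k1. \<integral>\<^sup>+t. (if Q_support k k1 \<and> resonant k k1 then X k1 t else 0)
      + (if Q_support k k1 \<and> \<not> resonant k k1 then X k1 t else 0) \<partial>lborel)"
    unfolding conv_form_def X_def by (intro nn_integral_cong) auto
  also have "\<dots> = nn_sum (\<lambda>k1. (\<integral>\<^sup>+t. (if Q_support k k1 \<and> resonant k k1 then X k1 t else 0) \<partial>lborel)
      + (\<integral>\<^sup>+t. (if Q_support k k1 \<and> \<not> resonant k k1 then X k1 t else 0) \<partial>lborel))"
    by (intro nn_integral_cong nn_integral_add) (use Xm in auto)
  also have "\<dots> = conv_form (\<lambda>k k1. Q_support k k1 \<and> resonant k k1) b F G k \<tau>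
      + conv_form (\<lambda>k k1. Q_support k k1 \<and> \<not> resonant k k1) b F G k \<tau>"
    unfolding conv_form_def X_def by (rule nn_integral_add) auto
  finally show ?thesis .
qed

lemma measurable_conv_form:
  assumes Fm: "\<And>k. F k \<in> borel_measurable borel" and Gm: "\<And>k. G k \<in> borel_measurable borel"
  shows "conv_form P b F G k \<in> borel_measurable lborel"
  unfolding conv_form_def
proof (rule measurable_nn_sum)
  fix k1
  show "(\<lambda>\<tau>. \<integral>\<^sup>+t. (if P k k1 then ennreal (F k1 t * jb (t - phase k1) powr (- b)
      * G (k - k1) (\<tau> - t) * jb (\<tau> - t - phase (k - k1)) powr (- b)) else 0) \<partial>lborel) \<in> borel_measurable lborel"
    using Fm[of k1] Gm[of "k - k1"] by measurable
qed

lemma power2_add_le_ennreal: "((x::ennreal) + y)\<^sup>2 \<le> 2 * x\<^sup>2 + 2 * y\<^sup>2"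
proof -
  have "(x + y)\<^sup>2 = x\<^sup>2 + 2 * x * y + y\<^sup>2" by (simp add: power2_sum add_ac)
  also have "\<dots> \<le> x\<^sup>2 + (x\<^sup>2 + y\<^sup>2) + y\<^sup>2" using sum_of_squares_ge_ennreal[of x y] by (intro add_mono) auto
  also have "\<dots> = 2 * x\<^sup>2 + 2 * y\<^sup>2" by (simp add: algebra_simps mult_2)
  finally show ?thesis .
qed

lemma resonant_part_sobolev_le:
  fixes F G :: "int \<times> int \<Rightarrow> real \<Rightarrow> real"
  assumes Fn: "\<And>k t. F k t \<ge> 0" and Gn: "\<And>k t. G k t \<ge> 0"
    and Fm: "\<And>k. F k \<in> borel_measurable borel" and Gm: "\<And>k. G k \<in> borel_measurable borel"
    and XF: "nn_sum (l2_sq F) < \<infinity>" and cnt: "counting_bound c g" and c: "c \<ge> 0" and g: "g \<ge> 0"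
    and b: "1/4 < b" "b < 1/2" and s: "s \<le> 0" and q: "2 * s + g < 0"
  shows "(\<integral>\<^sup>+\<tau>. nn_sum (\<lambda>k. ennreal (jb2 (fst k) (snd k) powr (2 * s))
      * (conv_form (\<lambda>k k1. Q_support k k1 \<and> resonant k k1) b F G k \<tau>)\<^sup>2) \<partial>lborel)
    \<le> ennreal (bracket_conv_const (2 * b)) * ennreal (((c * 2 powr g + 2) * 2 powr (- 2 * s)) / (1 - 2 powr (2 * s + g)))
      * nn_sum (l2_sq F) * nn_sum (l2_sq G)"
  by (rule resonant_part_le[OF Fn Gn Fm Gm XF b]) (rule nn_sum_resonant_weight_le[OF cnt c g s q])

lemma nonresonant_part_sobolev_le:
  fixes F G :: "int \<times> int \<Rightarrow> real \<Rightarrow> real"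
  assumes Fn: "\<And>k t. F k t \<ge> 0" and Gn: "\<And>k t. G k t \<ge> 0"
    and Fm: "\<And>k. F k \<in> borel_measurable borel" and Gm: "\<And>k. G k \<in> borel_measurable borel"
    and XF: "nn_sum (l2_sq F) < \<infinity>" and cnt: "counting_bound c g" and c: "c \<ge> 1" and g: "g \<ge> 0"
    and b: "1/4 < b" "b < 1/2" and s: "s \<le> 0"
  defines "p \<equiv> 4 * b - 1"
  assumes q: "2 * s + g + 2 * (1 - p) < 0"
  shows "(\<integral>\<^sup>+\<tau>. nn_sum (\<lambda>k. ennreal (jb2 (fst k) (snd k) powr (2 * s))
      * (conv_form (\<lambda>k k1. Q_support k k1 \<and> \<not> resonant k k1) b F G k \<tau>)\<^sup>2) \<partial>lborel)
    \<le> ennreal (bracket_conv_const (2 * b)) * (16 * ennreal (((1 + 4 / (1 - p)) * c * 2 powr (g - 2 * s))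
        / (1 - 2 powr (2 * s + g + 2 * (1 - p))))) * nn_sum (l2_sq F) * nn_sum (l2_sq G)"
proof (rule nonresonant_part_le[OF Fn Gn Fm Gm XF b])
  show "nn_sum (\<lambda>k1. if tile_index (dyadic_scale k) k1 = j \<and> \<not> resonant k k1
      then ennreal (jb (\<tau> - real_of_int (psi k k1)) powr (1 - 4 * b)) else 0)
    \<le> ennreal (level_bound c g p (dyadic_scale k))" for k \<tau> j
    unfolding p_def by (rule nn_sum_tile_level_le[OF cnt c g b])
  show "level_bound c g p m \<ge> 0" for m unfolding level_bound_def p_def using b by simp
  show "jb2 (fst k) (snd k) powr (2 * s) \<le> (2 ^ dyadic_scale k / 2) powr (2 * s)" for k
    using dyadic_scale_le_jb2[of k] s by (intro powr_mono2') auto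
  show "nn_sum (\<lambda>m. ennreal ((2 ^ m / 2) powr (2 * s) * level_bound c g p m))
    \<le> ennreal (((1 + 4 / (1 - p)) * c * 2 powr (g - 2 * s)) / (1 - 2 powr (2 * s + g + 2 * (1 - p))))"
    using b unfolding p_def by (intro nn_sum_dyadic_level_le[OF c g _ _ q[unfolded p_def]]) auto
qed

lemma nn_integral_conv_form_sq_split_le:
  fixes w :: "int \<times> int \<Rightarrow> ennreal"
  assumes Fm: "\<And>k. F k \<in> borel_measurable borel" and Gm: "\<And>k. G k \<in> borel_measurable borel"
  shows "(\<integral>\<^sup>+\<tau>. nn_sum (\<lambda>k. w k * (conv_form Q_support b F G k \<tau>)\<^sup>2) \<partial>lborel)
    \<le> 2 * (\<integral>\<^sup>+\<tau>. nn_sum (\<lambda>k. w k * (conv_form (\<lambda>k k1. Q_support k k1 \<and> resonant k k1) b F G k \<tau>)\<^sup>2) \<partial>lborel)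
      + 2 * (\<integral>\<^sup>+\<tau>. nn_sum (\<lambda>k. w k * (conv_form (\<lambda>k k1. Q_support k k1 \<and> \<not> resonant k k1) b F G k \<tau>)\<^sup>2) \<partial>lborel)"
proof -
  let ?R = "\<lambda>k \<tau>. conv_form (\<lambda>k k1. Q_support k k1 \<and> resonant k k1) b F G k \<tau>"
  let ?N = "\<lambda>k \<tau>. conv_form (\<lambda>k k1. Q_support k k1 \<and> \<not> resonant k k1) b F G k \<tau>"
  have "(\<integral>\<^sup>+\<tau>. nn_sum (\<lambda>k. w k * (conv_form Q_support b F G k \<tau>)\<^sup>2) \<partial>lborel)
      \<le> (\<integral>\<^sup>+\<tau>. 2 * nn_sum (\<lambda>k. w k * (?R k \<tau>)\<^sup>2) + 2 * nn_sum (\<lambda>k. w k * (?N k \<tau>)\<^sup>2) \<partial>lborel)"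
  proof (intro nn_integral_mono)
    fix \<tau>
    have "nn_sum (\<lambda>k. w k * (conv_form Q_support b F G k \<tau>)\<^sup>2)
        \<le> nn_sum (\<lambda>k. 2 * (w k * (?R k \<tau>)\<^sup>2) + 2 * (w k * (?N k \<tau>)\<^sup>2))"
      using mult_left_mono[OF power2_add_le_ennreal, of "w _"]
      unfolding conv_form_split[OF Fm Gm] by (intro nn_integral_mono) (simp add: algebra_simps)
    also have "\<dots> = 2 * nn_sum (\<lambda>k. w k * (?R k \<tau>)\<^sup>2) + 2 * nn_sum (\<lambda>k. w k * (?N k \<tau>)\<^sup>2)"
      by (simp add: nn_integral_add nn_sum_cmult)
    finally show "nn_sum (\<lambda>k. w k * (conv_form Q_support b F G k \<tau>)\<^sup>2)
        \<le> 2 * nn_sum (\<lambda>k. w k * (?R k \<tau>)\<^sup>2) + 2 * nn_sum (\<lambda>k. w k * (?N k \<tau>)\<^sup>2)" .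
  qed
  also have "\<dots> = 2 * (\<integral>\<^sup>+\<tau>. nn_sum (\<lambda>k. w k * (?R k \<tau>)\<^sup>2) \<partial>lborel)
      + 2 * (\<integral>\<^sup>+\<tau>. nn_sum (\<lambda>k. w k * (?N k \<tau>)\<^sup>2) \<partial>lborel)"
  proof -
    have "(\<lambda>\<tau>. nn_sum (\<lambda>k. w k * (conv_form P b F G k \<tau>)\<^sup>2)) \<in> borel_measurable lborel" for P
      by (rule measurable_nn_sum) (use measurable_conv_form[OF Fm Gm] in measurable)
    thus ?thesis by (simp add: nn_integral_add nn_integral_cmult)
  qed
  finally show ?thesis .
qed

lemma weighted_conv_form_le:
  fixes c g b s :: real
  assumes cnt: "counting_bound c g" and c: "c \<ge> 1" and g: "g \<ge> 0" and b: "1/4 < b" "b < 1/2"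
    and s: "s \<le> 0" and q: "2 * s + g + 2 * (2 - 4 * b) < 0"
  obtains K where "K \<ge> 0"
    and "\<And>F G. (\<And>k t. F k t \<ge> 0) \<Longrightarrow> (\<And>k t. G k t \<ge> 0)
      \<Longrightarrow> (\<And>k. F k \<in> borel_measurable borel) \<Longrightarrow> (\<And>k. G k \<in> borel_measurable borel)
      \<Longrightarrow> nn_sum (l2_sq F) < \<infinity>
      \<Longrightarrow> (\<integral>\<^sup>+\<tau>. nn_sum (\<lambda>k. ennreal (jb2 (fst k) (snd k) powr (2 * s)) * (conv_form Q_support b F G k \<tau>)\<^sup>2) \<partial>lborel)
        \<le> ennreal K * nn_sum (l2_sq F) * nn_sum (l2_sq G)"
proof
  define p where "p = 4 * b - 1"
  have p: "0 < p" "p < 1" "1 - p = 2 - 4 * b" using b unfolding p_def by auto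
  define CJ where "CJ = bracket_conv_const (2 * b)"
  define CD where "CD = ((c * 2 powr g + 2) * 2 powr (- 2 * s)) / (1 - 2 powr (2 * s + g))"
  define CR where "CR = ((1 + 4 / (1 - p)) * c * 2 powr (g - 2 * s)) / (1 - 2 powr (2 * s + g + 2 * (1 - p)))"
  have qD: "2 * s + g < 0" and qR: "2 * s + g + 2 * (1 - p) < 0" using q p by auto
  have CJ: "CJ \<ge> 0" unfolding CJ_def using bracket_conv_const_pos[of "2 * b"] b by simp
  have CD: "CD \<ge> 0" unfolding CD_def using c qD by (intro divide_nonneg_pos) (auto simp: powr_less_one)
  have CR: "CR \<ge> 0" unfolding CR_def using c p qR by (intro divide_nonneg_pos) (auto simp: powr_less_one)
  show "2 * CJ * (CD + 16 * CR) \<ge> 0" using CJ CD CR by simp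
  fix F G :: "int \<times> int \<Rightarrow> real \<Rightarrow> real"
  assume Fn: "\<And>k t. F k t \<ge> 0" and Gn: "\<And>k t. G k t \<ge> 0"
    and Fm: "\<And>k. F k \<in> borel_measurable borel" and Gm: "\<And>k. G k \<in> borel_measurable borel"
    and XF: "nn_sum (l2_sq F) < \<infinity>"
  define w where "w k = jb2 (fst k) (snd k) powr (2 * s)" for k :: "int \<times> int"
  let ?R = "\<lambda>k \<tau>. conv_form (\<lambda>k k1. Q_support k k1 \<and> resonant k k1) b F G k \<tau>"
  let ?N = "\<lambda>k \<tau>. conv_form (\<lambda>k k1. Q_support k k1 \<and> \<not> resonant k k1) b F G k \<tau>"
  have res: "(\<integral>\<^sup>+\<tau>. nn_sum (\<lambda>k. ennreal (w k) * (?R k \<tau>)\<^sup>2) \<partial>lborel)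
      \<le> ennreal CJ * ennreal CD * nn_sum (l2_sq F) * nn_sum (l2_sq G)"
    unfolding CJ_def CD_def w_def using c by (intro resonant_part_sobolev_le[OF Fn Gn Fm Gm XF cnt _ g b s qD]) simp
  have nonres: "(\<integral>\<^sup>+\<tau>. nn_sum (\<lambda>k. ennreal (w k) * (?N k \<tau>)\<^sup>2) \<partial>lborel)
      \<le> ennreal CJ * (16 * ennreal CR) * nn_sum (l2_sq F) * nn_sum (l2_sq G)"
    unfolding CJ_def CR_def w_def p_def
    by (rule nonresonant_part_sobolev_le[OF Fn Gn Fm Gm XF cnt c g b s qR[unfolded p_def]])
  have "(\<integral>\<^sup>+\<tau>. nn_sum (\<lambda>k. ennreal (w k) * (conv_form Q_support b F G k \<tau>)\<^sup>2) \<partial>lborel)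
      \<le> 2 * (\<integral>\<^sup>+\<tau>. nn_sum (\<lambda>k. ennreal (w k) * (?R k \<tau>)\<^sup>2) \<partial>lborel)
        + 2 * (\<integral>\<^sup>+\<tau>. nn_sum (\<lambda>k. ennreal (w k) * (?N k \<tau>)\<^sup>2) \<partial>lborel)"
    by (rule nn_integral_conv_form_sq_split_le[OF Fm Gm])
  also have "\<dots> \<le> 2 * (ennreal CJ * ennreal CD * nn_sum (l2_sq F) * nn_sum (l2_sq G))
      + 2 * (ennreal CJ * (16 * ennreal CR) * nn_sum (l2_sq F) * nn_sum (l2_sq G))"
    by (intro add_mono mult_left_mono res nonres) auto
  also have "\<dots> = 2 * ennreal CJ * (ennreal CD + 16 * ennreal CR) * nn_sum (l2_sq F) * nn_sum (l2_sq G)"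
    by (simp only: distrib_left distrib_right mult_ac)
  also have "2 * ennreal CJ * (ennreal CD + 16 * ennreal CR) = ennreal (2 * CJ * (CD + 16 * CR))"
  proof -
    have "ennreal (2 * CJ * (CD + 16 * CR)) = ennreal (2 * CJ) * ennreal (CD + 16 * CR)"
      using CJ CD CR by (intro ennreal_mult) auto
    also have "ennreal (2 * CJ) = 2 * ennreal CJ" using CJ by (simp add: numeral_mult_ennreal)
    also have "ennreal (CD + 16 * CR) = ennreal CD + 16 * ennreal CR" using CD CR by (simp add: numeral_mult_ennreal)
    finally show ?thesis by simp
  qed
  finally show "(\<integral>\<^sup>+\<tau>. nn_sum (\<lambda>k. ennreal (jb2 (fst k) (snd k) powr (2 * s)) * (conv_form Q_support b F G k \<tau>)\<^sup>2) \<partial>lborel)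
      \<le> ennreal (2 * CJ * (CD + 16 * CR)) * nn_sum (l2_sq F) * nn_sum (l2_sq G)"
    unfolding w_def .
qed

definition profile :: "real \<Rightarrow> stfun \<Rightarrow> int \<times> int \<Rightarrow> real \<Rightarrow> real" where
  "profile b u k t = jb (t - phase k) powr b * cmod (u (fst k) (snd k) t)"

lemma profile_nonneg: "profile b u k t \<ge> 0"
  unfolding profile_def by simp

lemma measurable_profile:
  assumes "inX 0 b u"
  shows "profile b u k \<in> borel_measurable borel"
proof -
  have "(\<lambda>t. u (fst k) (snd k) t) \<in> borel_measurable borel" using assms unfolding inX_def by simp
  thus ?thesis unfolding profile_def by measurable
qed

lemma profile_mult_jb_powr: "profile b u k t * jb (t - phase k) powr (- b) = cmod (u (fst k) (snd k) t)"
proof -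
  have "jb (t - phase k) powr b * jb (t - phase k) powr (- b) = 1"
    using jb_pos[of "t - phase k"] by (simp add: powr_add[symmetric])
  thus ?thesis unfolding profile_def by (simp add: algebra_simps)
qed

lemma Xsq_eq_nn_sum_l2_sq:
  assumes "inX 0 b u"
  shows "Xsq 0 b u = nn_sum (l2_sq (profile b u))"
proof -
  have "ennreal (jb (\<tau> - phi (fst k) (snd k)) powr (2 * b) * jb2 (fst k) (snd k) powr (2 * 0) * (cmod (u (fst k) (snd k) \<tau>))\<^sup>2)
      = ennreal ((profile b u k \<tau>)\<^sup>2)" for k \<tau>
  proof -
    have "jb2 (fst k) (snd k) powr (2 * 0) = 1" using jb2_ge(3)[where a = "fst k" and b = "snd k"] by simp
    moreover have "(jb (\<tau> - phase k) powr b)\<^sup>2 = jb (\<tau> - phase k) powr (2 * b)"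
      unfolding power2_eq_square by (simp add: powr_add[symmetric])
    ultimately show ?thesis unfolding profile_def phase_def phi_eq_phi_int by (simp add: power_mult_distrib)
  qed
  hence "Xsq 0 b u = (\<integral>\<^sup>+\<tau>. nn_sum (\<lambda>k. ennreal ((profile b u k \<tau>)\<^sup>2)) \<partial>lborel)"
    unfolding Xsq_def by simp
  also have "\<dots> = nn_sum (\<lambda>k. \<integral>\<^sup>+\<tau>. ennreal ((profile b u k \<tau>)\<^sup>2) \<partial>lborel)"
    by (rule nn_integral_nn_sum_swap) (use measurable_profile[OF assms] in measurable)
  finally show ?thesis unfolding l2_sq_def .
qed

lemma ennreal_infsum_le_nn_sum:
  fixes f :: "'a::countable \<Rightarrow> real"
  assumes f: "f summable_on UNIV" and nn: "\<And>x. f x \<ge> 0"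
  shows "ennreal (infsum f UNIV) \<le> nn_sum (\<lambda>x. ennreal (f x))"
proof (cases "nn_sum (\<lambda>x. ennreal (f x)) = \<infinity>")
  case False
  define B where "B = enn2real (nn_sum (\<lambda>x. ennreal (f x)))"
  have eB: "nn_sum (\<lambda>x. ennreal (f x)) = ennreal B" unfolding B_def using False by (simp add: ennreal_enn2real_if)
  have "infsum f UNIV \<le> B"
  proof (rule infsum_le_finite_sums[OF f])
    fix X :: "'a set" assume X: "finite X"
    have "ennreal (sum f X) = (\<Sum>x\<in>X. ennreal (f x))" using nn by (simp add: sum_ennreal)
    also have "\<dots> = (\<integral>\<^sup>+x. ennreal (f x) \<partial>count_space X)" by (rule nn_integral_count_space_finite[OF X, symmetric])
    also have "\<dots> = nn_sum (\<lambda>x. ennreal (f x) * indicator X x)" by (simp add: nn_integral_count_space_indicator)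
    also have "\<dots> \<le> nn_sum (\<lambda>x. ennreal (f x))" by (intro nn_integral_mono) (auto simp: indicator_def)
    finally have "ennreal (sum f X) \<le> ennreal B" unfolding eB .
    moreover have "B \<ge> 0" unfolding B_def by simp
    ultimately show "sum f X \<le> B" by (simp add: ennreal_le_iff)
  qed
  hence "ennreal (infsum f UNIV) \<le> ennreal B" by (rule ennreal_leI)
  thus ?thesis unfolding eB .
qed simp

lemma norm_Q_le:
  "ennreal (cmod (Q u v (fst k) (snd k) \<tau>)) \<le> nn_sum (\<lambda>k1. \<integral>\<^sup>+t. (if Q_support k k1
      then ennreal (cmod (u (fst k1) (snd k1) t) * cmod (v (fst (k - k1)) (snd (k - k1)) (\<tau> - t))) else 0) \<partial>lborel)"
proof -
  define f where "f k1 t = (if fst k = 0 \<and> fst k1 = 0 then 0 else 1) * u (fst k1) (snd k1) t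
      * v (fst k - fst k1) (snd k - snd k1) (\<tau> - t)" for k1 t
  have Q: "Q u v (fst k) (snd k) \<tau> = infsum (\<lambda>k1. integral\<^sup>L lborel (f k1)) UNIV"
    unfolding Q_def f_def by (simp add: case_prod_beta')
  have bound: "ennreal (cmod (integral\<^sup>L lborel (f k1))) \<le> (\<integral>\<^sup>+t. (if Q_support k k1
      then ennreal (cmod (u (fst k1) (snd k1) t) * cmod (v (fst (k - k1)) (snd (k - k1)) (\<tau> - t))) else 0) \<partial>lborel)" for k1
  proof -
    have "ennreal (norm (f k1 t)) = (if Q_support k k1
        then ennreal (cmod (u (fst k1) (snd k1) t) * cmod (v (fst (k - k1)) (snd (k - k1)) (\<tau> - t))) else 0)" for t
      unfolding f_def Q_support_def by (simp add: norm_mult)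
    moreover have "ennreal (cmod (integral\<^sup>L lborel (f k1))) \<le> (\<integral>\<^sup>+t. norm (f k1 t) \<partial>lborel)"
      by (cases "integrable lborel (f k1)") (simp_all add: integral_norm_bound_ennreal not_integrable_integral_eq)
    ultimately show ?thesis by simp
  qed
  show ?thesis
  proof (cases "(\<lambda>k1. integral\<^sup>L lborel (f k1)) summable_on UNIV")
    case True
    hence abs: "Infinite_Sum.abs_summable_on (\<lambda>k1. integral\<^sup>L lborel (f k1)) UNIV"
      by (subst summable_on_iff_abs_summable_on_complex[symmetric])
    have "ennreal (cmod (Q u v (fst k) (snd k) \<tau>)) \<le> ennreal (infsum (\<lambda>k1. cmod (integral\<^sup>L lborel (f k1))) UNIV)"
      unfolding Q by (intro ennreal_leI norm_infsum_bound abs)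
    also have "\<dots> \<le> nn_sum (\<lambda>k1. ennreal (cmod (integral\<^sup>L lborel (f k1))))"
      by (rule ennreal_infsum_le_nn_sum) (use abs in auto)
    also have "\<dots> \<le> nn_sum (\<lambda>k1. \<integral>\<^sup>+t. (if Q_support k k1
      then ennreal (cmod (u (fst k1) (snd k1) t) * cmod (v (fst (k - k1)) (snd (k - k1)) (\<tau> - t))) else 0) \<partial>lborel)"
      by (intro nn_integral_mono bound)
    finally show ?thesis .
  next
    case False
    thus ?thesis unfolding Q by (simp add: infsum_not_exists)
  qed
qed

lemma norm_Q_le_conv_form:
  "ennreal (cmod (Q u v (fst k) (snd k) \<tau>)) \<le> conv_form Q_support b (profile b u) (profile b v) k \<tau>"
proof -
  have eq: "profile b u k1 t * jb (t - phase k1) powr (- b) * profile b v (k - k1) (\<tau> - t) * jb (\<tau> - t - phase (k - k1)) powr (- b)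
      = cmod (u (fst k1) (snd k1) t) * cmod (v (fst (k - k1)) (snd (k - k1)) (\<tau> - t))" for k1 t
    using profile_mult_jb_powr[of b u k1 t] profile_mult_jb_powr[of b v "k - k1" "\<tau> - t"]
    by (simp only: mult_ac)
  show ?thesis unfolding conv_form_def eq by (rule norm_Q_le)
qed

lemma L2Hsq_Q_le:
  "L2Hsq s (Q u v) \<le> (\<integral>\<^sup>+\<tau>. nn_sum (\<lambda>k. ennreal (jb2 (fst k) (snd k) powr (2 * s))
      * (conv_form Q_support b (profile b u) (profile b v) k \<tau>)\<^sup>2) \<partial>lborel)"
  unfolding L2Hsq_def
proof (intro nn_integral_mono)
  fix \<tau> and k :: "int \<times> int"
  have "ennreal (jb2 (fst k) (snd k) powr (2 * s) * (cmod (Q u v (fst k) (snd k) \<tau>))\<^sup>2)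
      = ennreal (jb2 (fst k) (snd k) powr (2 * s)) * (ennreal (cmod (Q u v (fst k) (snd k) \<tau>)))\<^sup>2"
    by (simp add: ennreal_mult ennreal_power)
  also have "\<dots> \<le> ennreal (jb2 (fst k) (snd k) powr (2 * s)) * (conv_form Q_support b (profile b u) (profile b v) k \<tau>)\<^sup>2"
    by (intro mult_left_mono power_mono_ennreal norm_Q_le_conv_form) auto
  finally show "ennreal (jb2 (fst k) (snd k) powr (2 * s) * (cmod (Q u v (fst k) (snd k) \<tau>))\<^sup>2)
      \<le> ennreal (jb2 (fst k) (snd k) powr (2 * s)) * (conv_form Q_support b (profile b u) (profile b v) k \<tau>)\<^sup>2" .
qed

lemma bilinear_estimate:
  fixes c g b s :: real
  assumes "counting_bound c g" and "c \<ge> 1" and "g \<ge> 0" and "1/4 < b" "b < 1/2"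
    and "s \<le> 0" and "2 * s + g + 2 * (2 - 4 * b) < 0"
  obtains C where "\<And>u v. inX 0 b u \<Longrightarrow> inX 0 b v \<Longrightarrow> L2Hsq s (Q u v) \<le> ennreal (C\<^sup>2) * Xsq 0 b u * Xsq 0 b v"
proof -
  obtain K where K: "K \<ge> 0" and est: "\<And>F G. (\<And>k t. F k t \<ge> 0) \<Longrightarrow> (\<And>k t. G k t \<ge> 0)
      \<Longrightarrow> (\<And>k. F k \<in> borel_measurable borel) \<Longrightarrow> (\<And>k. G k \<in> borel_measurable borel)
      \<Longrightarrow> nn_sum (l2_sq F) < \<infinity>
      \<Longrightarrow> (\<integral>\<^sup>+\<tau>. nn_sum (\<lambda>k. ennreal (jb2 (fst k) (snd k) powr (2 * s)) * (conv_form Q_support b F G k \<tau>)\<^sup>2) \<partial>lborel)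
        \<le> ennreal K * nn_sum (l2_sq F) * nn_sum (l2_sq G)"
    using weighted_conv_form_le[OF assms] by blast
  show ?thesis
  proof
    fix u v assume u: "inX 0 b u" and v: "inX 0 b v"
    have "L2Hsq s (Q u v) \<le> (\<integral>\<^sup>+\<tau>. nn_sum (\<lambda>k. ennreal (jb2 (fst k) (snd k) powr (2 * s))
        * (conv_form Q_support b (profile b u) (profile b v) k \<tau>)\<^sup>2) \<partial>lborel)"
      by (rule L2Hsq_Q_le)
    also have "\<dots> \<le> ennreal K * nn_sum (l2_sq (profile b u)) * nn_sum (l2_sq (profile b v))"
      using u Xsq_eq_nn_sum_l2_sq[OF u]
      by (intro est profile_nonneg measurable_profile u v) (simp add: inX_def)
    finally show "L2Hsq s (Q u v) \<le> ennreal ((sqrt K)\<^sup>2) * Xsq 0 b u * Xsq 0 b v"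
      using K Xsq_eq_nn_sum_l2_sq[OF u] Xsq_eq_nn_sum_l2_sq[OF v] by simp
  qed
qed

theorem mainTheorem5:
  fixes gamma :: real
  assumes "0 \<le> gamma" and "gamma < 1" and "counting_hyp gamma"
  shows "\<forall>eps>0. \<exists>b. 0 < b \<and> b < 1/2 \<and> (\<exists>C::real. \<forall>u v.
           inX 0 b u \<longrightarrow> inX 0 b v \<longrightarrow>
           L2Hsq (- gamma / 2 - eps) (Q u v) \<le> ennreal (C\<^sup>2) * Xsq 0 b u * Xsq 0 b v)"
proof (intro allI impI)
  fix eps :: real assume eps: "eps > 0"
  define e where "e = min eps 1 / 4"
  have e: "0 < e" "e \<le> eps / 4" "e \<le> 1 / 4" unfolding e_def using eps by (simp_all add: min_def)
  obtain c0 where "counting_bound c0 (gamma + e)"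
    using assms(3) e(1) unfolding counting_hyp_def counting_bound_def by auto
  hence cnt: "counting_bound (max c0 1) (gamma + e)" by (rule counting_bound_mono) simp
  define b where "b = 1/2 - e / 16"
  have b: "1/4 < b" "b < 1/2" unfolding b_def using e by auto
  have "1 \<le> max c0 1" "0 \<le> gamma + e" "- gamma / 2 - eps \<le> 0"
    and "2 * (- gamma / 2 - eps) + (gamma + e) + 2 * (2 - 4 * b) < 0"
    using assms(1) e eps by (auto simp: b_def)
  then obtain C where "\<And>u v. inX 0 b u \<Longrightarrow> inX 0 b v
      \<Longrightarrow> L2Hsq (- gamma / 2 - eps) (Q u v) \<le> ennreal (C\<^sup>2) * Xsq 0 b u * Xsq 0 b v"
    using bilinear_estimate[OF cnt _ _ b] by blast
  with b show "\<exists>b. 0 < b \<and> b < 1/2 \<and> (\<exists>C::real. \<forall>u v. inX 0 b u \<longrightarrow> inX 0 b v \<longrightarrow>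
      L2Hsq (- gamma / 2 - eps) (Q u v) \<le> ennreal (C\<^sup>2) * Xsq 0 b u * Xsq 0 b v)"
    by (intro exI[of _ b]) auto
qed

end
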